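(* There is an absolute constant $C>0$ such that the following holds. Let $n\ge Ct^2$, let $F=\{I_1,\ldots,I_k\}$ be a $[t,k]$-interval system with $I_1,\ldots,I_k$ ordered left to right, and let $\mathfrak{s}=\mathrm{Sizes}(F)=(|I_1|,\ldots,|I_k|)$. Let $\mathcal{ALG}$ be an $\ell$-pass streaming algorithm with $s$ bits of memory which distinguishes between $\mathrm{Planted}[F]$ and $\mathrm{Uniform}$ with error at most $0.5\%$. Then there is a (randomized) $k$-party communication protocol $\Pi$ in which each player writes at most $\ell s$ bits, which solves unique set-disjointness under input distribution $\mathcal{D}_{\mathfrak{s}}$ with error at most $1\%$.
   Context: Streams are elements of $[n]^t$; $\mathrm{Uniform}$ is the uniform distribution on $[n]^t$. An interval is a nonempty set $\{a,\ldots,b\}$; a $[t,k]$-interval system is a set of $k$ pairwise disjoint intervals in $[t]$. $\mathrm{Planted}[F]$: sample a uniform needle $x\in[n]$; in each interval $I\in F$ choose a uniform index $a_I\in I$ and set $X_{a_I}=x$; all other coordinates are i.i.d. uniform in $[n]$. An $\ell$-pass streaming algorithm with $s$ bits of memory reads the stream in order $\ell$ times keeping only an $s$-bit state, and outputs a bit; it distinguishes $D_0,D_1$ with error $\delta$ if on a stream from $D_b$, $b$ a uniform bit, it outputs $b$ with probability $\ge1-\delta$. Unique set-disjointness: inputs $X=(X_1,\ldots,X_k)$ of subsets of $[n]$ (player $i$ holds $X_i$); $\mathcal{F}_0$ = pairwise disjoint tuples, $\mathcal{F}_1$ = tuples with one common element to all sets and otherwise pairwise disjoint; $\mathcal{F}^b_{\mathfrak{s}}=\mathcal{F}_b\cap\{|X_i|=s_i\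 \forall i\}$, $\mathcal{D}^b_{\mathfrak{s}}$ uniform on $\mathcal{F}^b_{\mathfrak{s}}$, $\mathcal{D}_{\mathfrak{s}}$ samples a uniform bit $b$ then $X\sim\mathcal{D}^b_{\mathfrak{s}}$; the protocol (blackboard model) has error $\delta$ if its output differs from $b$ with probability at most $\delta$. *)

theory Defs
  imports "HOL-Probability.Probability"
begin

text \<open>Conventions: the alphabet [n] is rendered as {0..<n} and stream positions [t]
as {0..<t}. A stream is a nat list of length t with entries < n.\<close>

definition streams :: "nat \<Rightarrow> nat \<Rightarrow> nat list set" where
  "streams n t = {xs. length xs = t \<and> set xs \<subseteq> {..<n}}"

definition uniform_stream :: "nat \<Rightarrow> nat \<Rightarrow> nat list pmf" where
  "uniform_stream n t = pmf_of_set (streams n t)"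

definition is_interval_system :: "nat \<Rightarrow> nat \<Rightarrow> nat set list \<Rightarrow> bool" where
  "is_interval_system t k F \<longleftrightarrow>
     length F = k \<and>
     (\<forall>I\<in>set F. \<exists>a b. a \<le> b \<and> b < t \<and> I = {a..b}) \<and>
     (\<forall>i j. i < j \<longrightarrow> j < k \<longrightarrow> Max (F ! i) < Min (F ! j))"

definition Sizes :: "nat set list \<Rightarrow> nat list" where
  "Sizes F = map card F"

definition planted :: "nat \<Rightarrow> nat \<Rightarrow> nat set list \<Rightarrow> nat list pmf" where
  "planted n t F = do {
      x \<leftarrow> pmf_of_set {..<n};
      a \<leftarrow> Pi_pmf (set F) 0 (\<lambda>I. pmf_of_set I);
      Y \<leftarrow> uniform_stream n t;
      return_pmf (map (\<lambda>i. if (\<exists>I\<in>set F. a I = i) then x else Y ! i) [0..<t])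
   }"

text \<open>With s bits of memory the states are the numbers below 2^s.\<close>
datatype salg = SAlg (s_init: nat) (s_step: "nat \<Rightarrow> nat \<Rightarrow> nat \<Rightarrow> nat \<Rightarrow> nat") (s_out: "nat \<Rightarrow> bool")

definition valid_salg :: "nat \<Rightarrow> salg \<Rightarrow> bool" where
  "valid_salg s A \<longleftrightarrow> s_init A < 2 ^ s \<and> (\<forall>j i q a. q < 2 ^ s \<longrightarrow> s_step A j i q a < 2 ^ s)"

definition run_pass :: "salg \<Rightarrow> nat \<Rightarrow> nat list \<Rightarrow> nat \<Rightarrow> nat" where
  "run_pass A j xs q = fold (\<lambda>(i, a) q. s_step A j i q a) (zip [0..<length xs] xs) q"

definition run_salg :: "salg \<Rightarrow> nat \<Rightarrow> nat list \<Rightarrow> bool" where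
  "run_salg A l xs = s_out A (fold (\<lambda>j q. run_pass A j xs q) [0..<l] (s_init A))"

text \<open>A randomized l-pass s-bit algorithm is a distribution over deterministic ones.\<close>
definition distinguishes ::
  "nat \<Rightarrow> nat \<Rightarrow> salg pmf \<Rightarrow> nat list pmf \<Rightarrow> nat list pmf \<Rightarrow> real \<Rightarrow> bool" where
  "distinguishes l s Alg D0 D1 \<delta> \<longleftrightarrow>
     (\<forall>A\<in>set_pmf Alg. valid_salg s A) \<and>
     measure_pmf.prob (do {
        b \<leftarrow> bernoulli_pmf (1/2);
        X \<leftarrow> (if b then D1 else D0);
        A \<leftarrow> Alg;
        return_pmf (run_salg A l X = b) }) {True} \<ge> 1 - \<delta>"

text \<open>Players are 0..k-1, player i holds X ! i.\<close>
datatype protocol = Protocol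
  (p_speaker: "bool list \<Rightarrow> nat option")
  (p_msg: "nat \<Rightarrow> nat set \<Rightarrow> bool list \<Rightarrow> bool")
  (p_decide: "bool list \<Rightarrow> bool")

fun transcript :: "protocol \<Rightarrow> nat set list \<Rightarrow> nat \<Rightarrow> bool list" where
  "transcript P X 0 = []"
| "transcript P X (Suc m) =
     (let \<tau> = transcript P X m in
        case p_speaker P \<tau> of None \<Rightarrow> \<tau> | Some i \<Rightarrow> \<tau> @ [p_msg P i (X ! i) \<tau>])"

definition halts :: "protocol \<Rightarrow> nat set list \<Rightarrow> bool" where
  "halts P X \<longleftrightarrow> (\<exists>m. p_speaker P (transcript P X m) = None)"

definition final_transcript :: "protocol \<Rightarrow> nat set list \<Rightarrow> bool list" where
  "final_transcript P X = transcript P X (LEAST m. p_speaker P (transcript P X m) = None)"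

definition protocol_output :: "protocol \<Rightarrow> nat set list \<Rightarrow> bool" where
  "protocol_output P X = p_decide P (final_transcript P X)"

definition bits_by :: "protocol \<Rightarrow> nat \<Rightarrow> bool list \<Rightarrow> nat" where
  "bits_by P i \<tau> = card {j. j < length \<tau> \<and> p_speaker P (take j \<tau>) = Some i}"

definition writes_at_most :: "nat \<Rightarrow> nat \<Rightarrow> protocol \<Rightarrow> bool" where
  "writes_at_most k B P \<longleftrightarrow>
     (\<forall>\<tau> i. p_speaker P \<tau> = Some i \<longrightarrow> i < k) \<and>
     (\<forall>X. length X = k \<longrightarrow> halts P X \<and> (\<forall>m i. bits_by P i (transcript P X m) \<le> B))"

definition pw_disjoint :: "nat set list \<Rightarrow> bool" where
  "pw_disjoint X \<longleftrightarrow> (\<forall>i j. i < length X \<longrightarrow> j < length X \<longrightarrow> i \<noteq> j \<longrightarrow> X ! i \<inter> X ! j = {})"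

definition uniquely_intersecting :: "nat \<Rightarrow> nat set list \<Rightarrow> bool" where
  "uniquely_intersecting n X \<longleftrightarrow>
     (\<exists>x<n. (\<forall>i<length X. x \<in> X ! i) \<and>
            (\<forall>i j. i < length X \<longrightarrow> j < length X \<longrightarrow> i \<noteq> j \<longrightarrow> X ! i \<inter> X ! j = {x}))"

definition USD_inputs :: "nat \<Rightarrow> nat list \<Rightarrow> bool \<Rightarrow> nat set list set" where
  "USD_inputs n sz b = {X. length X = length sz \<and>
       (\<forall>i<length sz. X ! i \<subseteq> {..<n} \<and> card (X ! i) = sz ! i) \<and>
       (if b then uniquely_intersecting n X else pw_disjoint X)}"

definition usd_error :: "nat \<Rightarrow> nat list \<Rightarrow> protocol pmf \<Rightarrow> real" where
  "usd_error n sz Pr = measure_pmf.prob (do {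
        b \<leftarrow> bernoulli_pmf (1/2);
        X \<leftarrow> pmf_of_set (USD_inputs n sz b);
        P \<leftarrow> Pr;
        return_pmf (protocol_output P X \<noteq> b) }) {True}"

end

theory Submission
  imports Defs
begin

text \<open>
  The players simulate the streaming algorithm on a stream built from their sets: player \<open>i\<close>
  writes its set, in an order permuted by public randomness, into the interval \<open>I\<^sub>i\<close>, and
  public random symbols fill all other positions. The algorithm is run interval by interval, each
  player announcing the \<open>s\<close>-bit memory state after its own segment, so that every player writes
  \<open>s\<close> bits per pass.

  On pairwise disjoint inputs the stream is uniform among the streams that are injective on every
  interval and whose interval images are pairwise disjoint; on uniquely intersecting inputs it is
  uniform among those whose interval images share exactly one symbol, the needle. Conditioning
  \<open>Uniform\<close> and \<open>Planted[F]\<close> on these events changes probabilities by at most the probability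
  of a collision among \<open>t\<close> uniform symbols or with the needle, i.e. by \<open>(t\<^sup>2 + t) / n\<close>,
  which is at most \<open>0.2%\<close> once \<open>n \<ge> 1000 t\<^sup>2\<close>. Hence the protocol errs with probability
  at most that of the algorithm plus \<open>0.15%\<close>.
\<close>

section \<open>Uniform distributions and acceptance probabilities\<close>

lemma map_pmf_of_set_equal_fibres:
  assumes fin: "finite A" and ne: "A \<noteq> {}"
    and fibre: "\<And>y. y \<in> f ` A \<Longrightarrow> card {x\<in>A. f x = y} = c"
  shows "map_pmf f (pmf_of_set A) = pmf_of_set (f ` A)"
proof (rule pmf_eqI)
  fix y
  have "card A = card (\<Union>z\<in>f ` A. {x\<in>A. f x = z})"
    by (rule arg_cong[of _ _ card]) auto
  also have "\<dots> = (\<Sum>z\<in>f ` A. card {x\<in>A. f x = z})"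
    by (rule card_UN_disjoint) (use fin in auto)
  also have "\<dots> = card (f ` A) * c" using fibre by simp
  finally have card_A: "card A = card (f ` A) * c" .
  have pmf_map: "pmf (map_pmf f (pmf_of_set A)) y = card {x\<in>A. f x = y} / card A"
    using fin ne by (simp add: pmf_map measure_pmf_of_set Int_def vimage_def conj_commute)
  show "pmf (map_pmf f (pmf_of_set A)) y = pmf (pmf_of_set (f ` A)) y"
  proof (cases "y \<in> f ` A")
    case True
    then have "0 < card {x\<in>A. f x = y}" using fin by (auto simp: card_gt_0_iff)
    then have "0 < c" using fibre[OF True] by simp
    then show ?thesis using True fin ne pmf_map fibre[OF True] card_A by simp
  next
    case False
    then have "{x\<in>A. f x = y} = {}" by auto
    then have "pmf (map_pmf f (pmf_of_set A)) y = 0"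
      unfolding pmf_map by (simp only: card.empty of_nat_0 div_0)
    then show ?thesis using False fin ne by simp
  qed
qed

lemma measure_pmf_of_set_subset_diff:
  assumes fin: "finite A" and sub: "G \<subseteq> A" and ne: "G \<noteq> {}"
  shows "\<bar>measure_pmf.prob (pmf_of_set G) E - measure_pmf.prob (pmf_of_set A) E\<bar>
          \<le> card (A - G) / card A"
proof -
  have finG: "finite G" using fin sub by (rule finite_subset[rotated])
  have neA: "A \<noteq> {}" using ne sub by blast
  define a g e d where "a = real (card A)" and "g = real (card G)"
    and "e = real (card (G \<inter> E))" and "d = real (card ((A - G) \<inter> E))"
  have "A \<inter> E = (G \<inter> E) \<union> ((A - G) \<inter> E)" "(G \<inter> E) \<inter> ((A - G) \<inter> E) = {}" using sub by auto
  then have card_AE: "real (card (A \<inter> E)) = e + d"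
    unfolding e_def d_def using fin finG by (simp add: card_Un_disjoint)
  have card_diff: "real (card (A - G)) = a - g"
    unfolding a_def g_def using card_Diff_subset[OF finG sub] card_mono[OF fin sub] by simp
  have "d \<le> a - g" unfolding d_def card_diff[symmetric] using fin by (simp add: card_mono)
  moreover have "e \<le> g" "0 < g" "g \<le> a"
    unfolding e_def g_def a_def using finG ne fin sub by (auto simp: card_mono card_gt_0_iff)
  moreover have "0 \<le> d" "0 \<le> e" unfolding d_def e_def by simp_all
  ultimately have "0 \<le> (e / g) * (a - g)" "(e / g) * (a - g) \<le> a - g"
    using mult_left_le_one_le[of "a - g" "e / g"] by auto
  then have "\<bar>d - (e / g) * (a - g)\<bar> \<le> a - g"
    using \<open>0 \<le> d\<close> \<open>d \<le> a - g\<close> by linarith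
  moreover have "(e + d) / a - e / g = (d - (e / g) * (a - g)) / a"
    using \<open>0 < g\<close> \<open>g \<le> a\<close> by (simp add: field_simps)
  moreover have "0 < a" using \<open>0 < g\<close> \<open>g \<le> a\<close> by linarith
  ultimately have "\<bar>(e + d) / a - e / g\<bar> \<le> (a - g) / a"
    by (simp add: abs_divide divide_right_mono)
  moreover have "measure_pmf.prob (pmf_of_set A) E = (e + d) / a"
    "measure_pmf.prob (pmf_of_set G) E = e / g"
    using card_AE ne neA fin finG by (auto simp: measure_pmf_of_set a_def g_def e_def)
  ultimately show ?thesis using card_diff by (simp add: abs_minus_commute a_def)
qed

lemma pair_pmf_of_set:
  assumes "finite A" "A \<noteq> {}" "finite B" "B \<noteq> {}"
  shows "pair_pmf (pmf_of_set A) (pmf_of_set B) = pmf_of_set (A \<times> B)"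
proof (rule pmf_eqI)
  fix z :: "'a \<times> 'b"
  show "pmf (pair_pmf (pmf_of_set A) (pmf_of_set B)) z = pmf (pmf_of_set (A \<times> B)) z"
    using assms by (cases z) (simp add: pmf_pair indicator_def card_cartesian_product)
qed

(* If G is empty the bound c / r is at least 1, so \<mu> only matters for nonempty G. *)
lemma prob_map_pmf_of_set_subset_close:
  fixes r c :: real
  assumes fin: "finite A" and ne: "A \<noteq> {}" and sub: "G \<subseteq> A"
    and \<mu>: "G \<noteq> {} \<Longrightarrow> map_pmf f (pmf_of_set G) = \<mu>"
    and bad: "r * card (A - G) \<le> c * card A" and r: "0 < r"
  shows "\<bar>measure_pmf.prob \<mu> E - measure_pmf.prob (map_pmf f (pmf_of_set A)) E\<bar> \<le> c / r"
proof (cases "G = {}")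
  case True
  have "0 < card A" using fin ne by (simp add: card_gt_0_iff)
  then have "1 \<le> c / r" using bad True r by (simp add: field_simps)
  moreover have "\<bar>measure_pmf.prob \<mu> E - measure_pmf.prob (map_pmf f (pmf_of_set A)) E\<bar> \<le> 1"
    using measure_pmf.prob_le_1[of \<mu> E] measure_pmf.prob_le_1[of "map_pmf f (pmf_of_set A)" E]
      measure_nonneg[of \<mu> E] measure_nonneg[of "map_pmf f (pmf_of_set A)" E]
    by linarith
  ultimately show ?thesis by linarith
next
  case False
  have "\<bar>measure_pmf.prob (pmf_of_set G) (f -` E) - measure_pmf.prob (pmf_of_set A) (f -` E)\<bar>
      \<le> card (A - G) / card A"
    by (rule measure_pmf_of_set_subset_diff[OF fin sub False])
  also have "\<dots> \<le> c / r"
    using bad r fin ne by (simp add: field_simps card_gt_0_iff)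
  finally show ?thesis using \<mu>[OF False] by (simp flip: measure_map_pmf)
qed

lemma prob_bind_return_eq_expectation:
  "measure_pmf.prob (M \<bind> (\<lambda>A. D \<bind> (\<lambda>x. return_pmf (P A x)))) {True}
     = measure_pmf.expectation M (\<lambda>A. measure_pmf.prob D {x. P A x})"
proof -
  have "measure_pmf.prob (M \<bind> (\<lambda>A. D \<bind> (\<lambda>x. return_pmf (P A x)))) {True}
      = (\<integral>A. pmf (D \<bind> (\<lambda>x. return_pmf (P A x))) True \<partial>M)"
    by (simp add: measure_pmf_single pmf_bind)
  also have "\<dots> = measure_pmf.expectation M (\<lambda>A. measure_pmf.prob D {x. P A x})"
    by (intro Bochner_Integration.integral_cong refl)
       (simp add: bind_return_pmf' map_pmf_def[symmetric] pmf_map vimage_def)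
  finally show ?thesis .
qed

lemma integrable_prob: "integrable (measure_pmf M) (\<lambda>A. measure_pmf.prob (D A) (E A))"
  by (rule measure_pmf.integrable_const_bound[where B = 1]) auto

lemma expectation_prob_Not:
  "measure_pmf.expectation M (\<lambda>A. measure_pmf.prob D {x. \<not> P A x})
     = 1 - measure_pmf.expectation M (\<lambda>A. measure_pmf.prob D {x. P A x})"
proof -
  have "measure_pmf.prob D {x. \<not> P A x} = 1 - measure_pmf.prob D {x. P A x}" for A
    using measure_pmf.prob_compl[of "{x. P A x}" D] by (simp add: Compl_eq_Diff_UNIV[symmetric] Collect_neg_eq)
  then show ?thesis using integrable_prob[of M "\<lambda>_. D"] by simp
qed

lemma expectation_prob_diff_le:
  assumes "\<And>E. \<bar>measure_pmf.prob \<mu> E - measure_pmf.prob \<nu> E\<bar> \<le> \<epsilon>"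
  shows "\<bar>measure_pmf.expectation M (\<lambda>A. measure_pmf.prob \<mu> {x. P A x})
          - measure_pmf.expectation M (\<lambda>A. measure_pmf.prob \<nu> {x. P A x})\<bar> \<le> \<epsilon>"
proof -
  have "\<bar>measure_pmf.expectation M (\<lambda>A. measure_pmf.prob \<mu> {x. P A x})
          - measure_pmf.expectation M (\<lambda>A. measure_pmf.prob \<nu> {x. P A x})\<bar>
      = \<bar>measure_pmf.expectation M
          (\<lambda>A. measure_pmf.prob \<mu> {x. P A x} - measure_pmf.prob \<nu> {x. P A x})\<bar>"
    using integrable_prob[of M "\<lambda>_. \<mu>"] integrable_prob[of M "\<lambda>_. \<nu>"] by simp
  also have "\<dots> \<le> measure_pmf.expectation M
          (\<lambda>A. \<bar>measure_pmf.prob \<mu> {x. P A x} - measure_pmf.prob \<nu> {x. P A x}\<bar>)"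
    by (rule integral_abs_bound)
  also have "\<dots> \<le> measure_pmf.expectation M (\<lambda>_. \<epsilon>)"
    by (intro integral_mono) (auto intro!: integrable_abs integrable_diff integrable_prob assms)
  finally show ?thesis by simp
qed

lemma prob_bernoulli_half_bind:
  "measure_pmf.prob (bernoulli_pmf (1/2) \<bind> g) {True}
     = (measure_pmf.prob (g True) {True} + measure_pmf.prob (g False) {True}) / 2"
  by (simp add: measure_pmf_single pmf_bind)

definition accept_prob :: "salg pmf \<Rightarrow> nat \<Rightarrow> nat list pmf \<Rightarrow> real" where
  "accept_prob Alg l D = measure_pmf.expectation Alg (\<lambda>A. measure_pmf.prob D {xs. run_salg A l xs})"

lemma distinguishes_accept_prob:
  assumes "distinguishes l s Alg D0 D1 \<delta>"
  shows "1 - \<delta> \<le> (accept_prob Alg l D1 + (1 - accept_prob Alg l D0)) / 2"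
proof -
  have swap: "measure_pmf.prob (D \<bind> (\<lambda>X. Alg \<bind> (\<lambda>A. return_pmf (P A X)))) {True}
      = measure_pmf.expectation Alg (\<lambda>A. measure_pmf.prob D {X. P A X})" for D P
    by (subst bind_commute_pmf) (rule prob_bind_return_eq_expectation)
  from assms have "1 - \<delta> \<le> (measure_pmf.expectation Alg (\<lambda>A. measure_pmf.prob D1 {X. run_salg A l X})
      + measure_pmf.expectation Alg (\<lambda>A. measure_pmf.prob D0 {X. \<not> run_salg A l X})) / 2"
    unfolding distinguishes_def prob_bernoulli_half_bind by (simp add: swap)
  then show ?thesis unfolding accept_prob_def expectation_prob_Not .
qed

lemma accept_prob_diff_le:
  assumes "\<And>E. \<bar>measure_pmf.prob \<mu> E - measure_pmf.prob \<nu> E\<bar> \<le> \<epsilon>"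
  shows "\<bar>accept_prob Alg l \<mu> - accept_prob Alg l \<nu>\<bar> \<le> \<epsilon>"
  unfolding accept_prob_def by (rule expectation_prob_diff_le[OF assms])

lemma not_distinguishes_identical:
  assumes "\<delta> < 1 / 2"
  shows "\<not> distinguishes l s Alg D D \<delta>"
proof
  assume "distinguishes l s Alg D D \<delta>"
  from distinguishes_accept_prob[OF this] have "1 - \<delta> \<le> 1 / 2" by simp
  with assms show False by simp
qed

section \<open>Counting streams\<close>

lemma card_UN_le_uniform:
  assumes "finite I" and "\<And>i. i \<in> I \<Longrightarrow> m * card (A i) \<le> N"
  shows "m * card (\<Union>i\<in>I. A i) \<le> card I * N"
proof -
  have "m * card (\<Union>i\<in>I. A i) \<le> m * (\<Sum>i\<in>I. card (A i))"
    using assms(1) by (intro mult_le_mono2 card_UN_le)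
  also have "\<dots> = (\<Sum>i\<in>I. m * card (A i))" by (simp add: sum_distrib_left)
  also have "\<dots> \<le> (\<Sum>i\<in>I. N)" using assms(2) by (intro sum_mono)
  finally show ?thesis by simp
qed

lemma card_lists_nth_in:
  assumes "\<And>p. p < t \<Longrightarrow> finite (S p)"
  shows "card {xs. length xs = t \<and> (\<forall>p<t. xs ! p \<in> S p)} = (\<Prod>p<t. card (S p))"
proof -
  have "bij_betw (\<lambda>xs. restrict ((!) xs) {..<t}) {xs. length xs = t \<and> (\<forall>p<t. xs ! p \<in> S p)}
          (\<Pi>\<^sub>E p\<in>{..<t}. S p)"
    by (rule bij_betwI[where g = "\<lambda>f. map f [0..<t]"])
       (auto simp: PiE_def extensional_def restrict_def fun_eq_iff intro: nth_equalityI)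
  then have "card {xs. length xs = t \<and> (\<forall>p<t. xs ! p \<in> S p)} = card (\<Pi>\<^sub>E p\<in>{..<t}. S p)"
    by (rule bij_betw_same_card)
  then show ?thesis by (simp add: card_PiE)
qed

lemma streams_conv_nth: "streams n t = {xs. length xs = t \<and> (\<forall>p<t. xs ! p \<in> {..<n})}"
  by (auto simp: streams_def set_conv_nth)

lemma finite_streams: "finite (streams n t)"
  unfolding streams_def using finite_lists_length_eq[of "{..<n}" t] by (simp add: conj_commute)

lemma replicate_in_streams: "0 < n \<Longrightarrow> replicate t 0 \<in> streams n t"
  by (auto simp: streams_def)

definition streams_agreeing :: "nat \<Rightarrow> nat \<Rightarrow> nat set \<Rightarrow> nat list \<Rightarrow> nat list set" where
  "streams_agreeing n t S y = {R \<in> streams n t. \<forall>p<t. p \<notin> S \<longrightarrow> R ! p = y ! p}"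

lemma card_streams_agreeing:
  assumes S: "S \<subseteq> {..<t}" and y: "y \<in> streams n t"
  shows "card (streams_agreeing n t S y) = n ^ card S"
proof -
  have eq: "streams_agreeing n t S y
      = {xs. length xs = t \<and> (\<forall>p<t. xs ! p \<in> (if p \<in> S then {..<n} else {y ! p}))}"
    using y by (auto simp: streams_agreeing_def streams_conv_nth split: if_splits)
  have "card (streams_agreeing n t S y) = (\<Prod>p<t. card (if p \<in> S then {..<n} else {y ! p}))"
    unfolding eq by (rule card_lists_nth_in) simp
  also have "\<dots> = (\<Prod>p<t. if p \<in> S then n else 1)" by (intro prod.cong) auto
  also have "\<dots> = (\<Prod>p\<in>S. n)"
    using S by (simp add: prod.If_cases Int_absorb1)
  finally show ?thesis by simp
qed

lemma self_in_streams_agreeing: "y \<in> streams n t \<Longrightarrow> y \<in> streams_agreeing n t S y"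
  by (simp add: streams_agreeing_def)

lemma card_streams_collision:
  assumes p: "p < t" and q: "q < t" and pq: "p \<noteq> q"
  shows "n * card {Y \<in> streams n t. Y ! p = Y ! q} = card (streams n t)"
proof -
  let ?E = "{Y \<in> streams n t. Y ! p = Y ! q}"
  have "bij_betw (\<lambda>(Y, v). Y[q := v]) (?E \<times> {..<n}) (streams n t)"
  proof (rule bij_betwI[where g = "\<lambda>Z. (Z[q := Z ! p], Z ! q)"])
    show "(\<lambda>(Y, v). Y[q := v]) \<in> ?E \<times> {..<n} \<rightarrow> streams n t"
      using q by (auto simp: streams_conv_nth nth_list_update)
    show "(\<lambda>Z. (Z[q := Z ! p], Z ! q)) \<in> streams n t \<rightarrow> ?E \<times> {..<n}"
      using p q pq by (auto simp: streams_conv_nth nth_list_update)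
    show "(\<lambda>Z. (Z[q := Z ! p], Z ! q)) ((\<lambda>(Y, v). Y[q := v]) z) = z" if "z \<in> ?E \<times> {..<n}" for z
      using that p q pq by (auto simp: streams_conv_nth)
  qed simp
  then have "card (?E \<times> {..<n}) = card (streams n t)" by (rule bij_betw_same_card)
  then show ?thesis by (simp add: card_cartesian_product mult.commute)
qed

lemma planted_no_intervals:
  assumes "0 < n"
  shows "planted n t [] = uniform_stream n t"
proof -
  have "set_pmf (uniform_stream n t) = streams n t"
    unfolding uniform_stream_def using finite_streams replicate_in_streams[OF assms]
    by (intro set_pmf_of_set) auto
  then have "map (\<lambda>i. Y ! i) [0..<t] = Y" if "Y \<in> set_pmf (uniform_stream n t)" for Y
    using that map_nth[of Y] by (simp add: streams_def)
  then show ?thesis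
    by (simp add: planted_def bind_return_pmf cong: bind_pmf_cong) (simp flip: map_pmf_def add: map_pmf_idI)
qed

lemma quadratic_regime_bounds:
  assumes n: "0 < n" and large: "1000 * real t ^ 2 \<le> real n"
  shows "real t * real t / real n \<le> 1 / 1000" and "(real t * real t + real t) / real n \<le> 2 / 1000"
    and "t * t + t < n"
proof -
  have "t * t + t \<le> 2 * (t * t)" by (cases t) auto
  then have tt: "real t * real t + real t \<le> 2 * (real t * real t)"
    by (metis of_nat_add of_nat_le_iff of_nat_mult of_nat_numeral)
  show "real t * real t / real n \<le> 1 / 1000" "(real t * real t + real t) / real n \<le> 2 / 1000"
    using large tt n by (simp_all add: field_simps power2_eq_square)
  show "t * t + t < n"
  proof (cases "t = 0")
    case False
    then have "2 * (real t * real t) < 1000 * (real t * real t)" by simp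
    then have "real t * real t + real t < real n" using tt large by (simp add: power2_eq_square)
    then show ?thesis by (metis of_nat_add of_nat_less_iff of_nat_mult)
  qed (use n in simp)
qed

section \<open>Simulating a streaming algorithm by a blackboard protocol\<close>

definition salg_state :: "salg \<Rightarrow> nat \<Rightarrow> nat list \<Rightarrow> nat" where
  "salg_state A l xs = fold (\<lambda>j q. run_pass A j xs q) [0..<l] (s_init A)"

lemma run_salg_eq_salg_state: "run_salg A l xs = s_out A (salg_state A l xs)"
  by (simp add: run_salg_def salg_state_def)

definition encode_state :: "nat \<Rightarrow> nat \<Rightarrow> bool list" where
  "encode_state s q = map (bit q) [0..<s]"

definition decode_state :: "bool list \<Rightarrow> nat" where
  "decode_state bs = horner_sum of_bool 2 bs"

lemma decode_encode_state: "q < 2 ^ s \<Longrightarrow> decode_state (encode_state s q) = q"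
  unfolding decode_state_def encode_state_def horner_sum_bit_eq_take_bit by (simp add: take_bit_eq_mod)

definition announced_state :: "salg \<Rightarrow> nat \<Rightarrow> bool list \<Rightarrow> nat" where
  "announced_state A s \<tau> =
     (if length \<tau> div s = 0 then s_init A
      else decode_state (take s (drop ((length \<tau> div s - 1) * s) \<tau>)))"

definition segment_run ::
  "salg \<Rightarrow> (nat \<Rightarrow> nat) \<Rightarrow> (nat \<Rightarrow> nat set \<Rightarrow> nat \<Rightarrow> nat) \<Rightarrow> nat \<Rightarrow> nat \<Rightarrow> nat set \<Rightarrow> nat \<Rightarrow> nat"
  where "segment_run A c v j i Xi q = fold (\<lambda>p q. s_step A j p q (v i Xi p)) [c i..<c (Suc i)] q"

definition segmented_stream ::
  "nat \<Rightarrow> (nat \<Rightarrow> nat) \<Rightarrow> (nat \<Rightarrow> nat set \<Rightarrow> nat \<Rightarrow> nat) \<Rightarrow> nat set list \<Rightarrow> nat list \<Rightarrow> bool" where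
  "segmented_stream k c v X xs \<longleftrightarrow>
     c 0 = 0 \<and> c k = length xs \<and> (\<forall>i<k. c i \<le> c (Suc i)) \<and>
     (\<forall>i<k. \<forall>p. c i \<le> p \<and> p < c (Suc i) \<longrightarrow> xs ! p = v i (X ! i) p)"

(* Block b of s bits is written by player b mod k in pass b div k: starting from the state
   announced in block b - 1, the player runs the algorithm on its segment c i ..< c (Suc i), whose
   symbols v i Xi p it computes from its own set Xi, and writes the resulting state. *)
definition simulation_protocol :: "nat \<Rightarrow> nat \<Rightarrow> nat \<Rightarrow> salg \<Rightarrow> (nat \<Rightarrow> nat) \<Rightarrow>
    (nat \<Rightarrow> nat set \<Rightarrow> nat \<Rightarrow> nat) \<Rightarrow> (nat \<Rightarrow> bool) \<Rightarrow> protocol" where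
  "simulation_protocol k l s A c v out = Protocol
     (\<lambda>\<tau>. if length \<tau> < l * k * s then Some (length \<tau> div s mod k) else None)
     (\<lambda>i Xi \<tau>. bit (segment_run A c v (length \<tau> div s div k) i Xi (announced_state A s \<tau>))
                  (length \<tau> mod s))
     (\<lambda>\<tau>. out (announced_state A s \<tau>))"

primrec block_state :: "nat \<Rightarrow> salg \<Rightarrow> (nat \<Rightarrow> nat) \<Rightarrow> (nat \<Rightarrow> nat set \<Rightarrow> nat \<Rightarrow> nat) \<Rightarrow>
    nat set list \<Rightarrow> nat \<Rightarrow> nat" where
  "block_state k A c v X 0 = s_init A"
| "block_state k A c v X (Suc b) =
     segment_run A c v (b div k) (b mod k) (X ! (b mod k)) (block_state k A c v X b)"

definition simulation_transcript :: "nat \<Rightarrow> nat \<Rightarrow> nat \<Rightarrow> salg \<Rightarrow> (nat \<Rightarrow> nat) \<Rightarrow>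
    (nat \<Rightarrow> nat set \<Rightarrow> nat \<Rightarrow> nat) \<Rightarrow> nat set list \<Rightarrow> bool list" where
  "simulation_transcript k l s A c v X =
     map (\<lambda>m. bit (block_state k A c v X (Suc (m div s))) (m mod s)) [0..<l * k * s]"

lemma block_state_less:
  assumes "valid_salg s A"
  shows "block_state k A c v X b < 2 ^ s"
proof (induction b)
  case (Suc b)
  have "fold (\<lambda>p q. s_step A j p q (w p)) ps q < 2 ^ s" if "q < 2 ^ s" for j w ps q
    using that assms by (induction ps arbitrary: q) (auto simp: valid_salg_def)
  then show ?case using Suc by (simp add: segment_run_def)
qed (use assms in \<open>simp add: valid_salg_def\<close>)

lemma length_simulation_transcript: "length (simulation_transcript k l s A c v X) = l * k * s"
  by (simp add: simulation_transcript_def)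

lemma block_of_simulation_transcript:
  assumes b: "b < l * k"
  shows "take s (drop (b * s) (simulation_transcript k l s A c v X))
           = encode_state s (block_state k A c v X (Suc b))"
proof (rule nth_equalityI)
  have "b * s + s \<le> l * k * s" using b by (metis add.commute mult_Suc mult_le_mono1 Suc_leI)
  then show "length (take s (drop (b * s) (simulation_transcript k l s A c v X)))
      = length (encode_state s (block_state k A c v X (Suc b)))"
    by (simp add: length_simulation_transcript encode_state_def)
  fix j assume "j < length (take s (drop (b * s) (simulation_transcript k l s A c v X)))"
  with \<open>b * s + s \<le> l * k * s\<close> have j: "j < s" "b * s + j < l * k * s"
    by (auto simp: length_simulation_transcript)
  moreover have "b * s \<le> length (simulation_transcript k l s A c v X)"
    using b by (simp add: length_simulation_transcript)
  ultimately have "take s (drop (b * s) (simulation_transcript k l s A c v X)) ! j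
      = simulation_transcript k l s A c v X ! (b * s + j)"
    by simp
  also have "\<dots> = bit (block_state k A c v X (Suc b)) j"
    using j by (simp add: simulation_transcript_def del: block_state.simps)
  finally show "take s (drop (b * s) (simulation_transcript k l s A c v X)) ! j
      = encode_state s (block_state k A c v X (Suc b)) ! j"
    using j by (simp add: encode_state_def)
qed

lemma announced_state_simulation_transcript:
  assumes valid: "valid_salg s A" and m: "m \<le> l * k * s"
  shows "announced_state A s (take m (simulation_transcript k l s A c v X))
           = block_state k A c v X (m div s)"
proof (cases "m div s")
  case 0
  then show ?thesis using m by (simp add: announced_state_def length_simulation_transcript)
next
  case (Suc b)
  then have "0 < s" by (cases "s = 0") auto
  have "Suc b * s \<le> m" using Suc div_times_less_eq_dividend[of m s] by simp
  then have "b < l * k" using m \<open>0 < s\<close> by (metis le_trans less_eq_Suc_le mult_le_cancel2)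
  have "take s (drop (b * s) (take m (simulation_transcript k l s A c v X)))
      = take s (drop (b * s) (simulation_transcript k l s A c v X))"
    using \<open>Suc b * s \<le> m\<close> by (simp add: drop_take min_def)
  also have "\<dots> = encode_state s (block_state k A c v X (Suc b))"
    using \<open>b < l * k\<close> by (rule block_of_simulation_transcript)
  finally show ?thesis
    using Suc m valid by (simp add: announced_state_def length_simulation_transcript
        decode_encode_state block_state_less del: block_state.simps)
qed

lemma p_speaker_simulation_protocol:
  "p_speaker (simulation_protocol k l s A c v out) \<tau>
     = (if length \<tau> < l * k * s then Some (length \<tau> div s mod k) else None)"
  by (simp add: simulation_protocol_def)

lemma length_transcript_simulation_protocol:
  "length (transcript (simulation_protocol k l s A c v out) X m) = min m (l * k * s)"
  by (induction m) (auto simp: p_speaker_simulation_protocol Let_def)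

lemma transcript_simulation_protocol:
  assumes valid: "valid_salg s A"
  shows "m \<le> l * k * s \<Longrightarrow>
    transcript (simulation_protocol k l s A c v out) X m = take m (simulation_transcript k l s A c v X)"
proof (induction m)
  case (Suc m)
  let ?P = "simulation_protocol k l s A c v out" and ?T = "simulation_transcript k l s A c v X"
  have m: "m < l * k * s" using Suc.prems by simp
  then have IH: "transcript ?P X m = take m ?T" and len: "length (take m ?T) = m"
    using Suc by (simp_all add: length_simulation_transcript)
  have "p_msg ?P (m div s mod k) (X ! (m div s mod k)) (take m ?T)
      = bit (segment_run A c v (m div s div k) (m div s mod k) (X ! (m div s mod k))
               (block_state k A c v X (m div s))) (m mod s)"
    using announced_state_simulation_transcript[OF valid, of m] m len
    by (simp add: simulation_protocol_def)
  also have "\<dots> = ?T ! m"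
    using m by (simp add: simulation_transcript_def)
  finally have "transcript ?P X (Suc m) = take m ?T @ [?T ! m]"
    using IH len m by (simp add: p_speaker_simulation_protocol Let_def)
  then show ?case using m by (simp add: length_simulation_transcript take_Suc_conv_app_nth)
qed simp

lemma final_transcript_simulation_protocol:
  "final_transcript (simulation_protocol k l s A c v out) X
     = transcript (simulation_protocol k l s A c v out) X (l * k * s)"
proof -
  have "(LEAST m. p_speaker (simulation_protocol k l s A c v out)
                    (transcript (simulation_protocol k l s A c v out) X m) = None) = l * k * s"
    by (rule Least_equality)
       (auto simp: p_speaker_simulation_protocol length_transcript_simulation_protocol split: if_splits)
  then show ?thesis by (simp add: final_transcript_def)
qed

lemma bits_by_simulation_protocol:
  "bits_by (simulation_protocol k l s A c v out) i \<tau> \<le> l * s"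
proof -
  let ?J = "{j. j < l * k * s \<and> j div s mod k = i}"
  have "inj_on (\<lambda>j. (j div s div k, j mod s)) ?J"
  proof (rule inj_onI)
    fix a b assume "a \<in> ?J" "b \<in> ?J" "(a div s div k, a mod s) = (b div s div k, b mod s)"
    then have "a div s div k = b div s div k" "a div s mod k = b div s mod k" "a mod s = b mod s"
      by simp_all
    then have "a div s = b div s" "a mod s = b mod s"
      using div_mult_mod_eq[of "a div s" k] div_mult_mod_eq[of "b div s" k] by metis+
    then show "a = b" using div_mult_mod_eq[of a s] div_mult_mod_eq[of b s] by metis
  qed
  moreover have "(\<lambda>j. (j div s div k, j mod s)) ` ?J \<subseteq> {..<l} \<times> {..<s}"
  proof
    fix z assume "z \<in> (\<lambda>j. (j div s div k, j mod s)) ` ?J"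
    then obtain j where j: "j < l * k * s" and z: "z = (j div s div k, j mod s)" by blast
    then have "0 < s" "0 < k" by (auto intro!: gr0I)
    then have "j div s < l * k" using j by (simp add: div_less_iff_less_mult)
    with \<open>0 < s\<close> \<open>0 < k\<close> show "z \<in> {..<l} \<times> {..<s}"
      by (simp add: z div_less_iff_less_mult)
  qed
  ultimately have "card ?J \<le> l * s"
    using card_inj_on_le[of _ ?J "{..<l} \<times> {..<s}"] by (simp add: card_cartesian_product)
  moreover have "{j. j < length \<tau> \<and> p_speaker (simulation_protocol k l s A c v out) (take j \<tau>) = Some i}
      \<subseteq> ?J"
    by (auto simp: p_speaker_simulation_protocol split: if_splits)
  then have "bits_by (simulation_protocol k l s A c v out) i \<tau> \<le> card ?J"
    unfolding bits_by_def by (intro card_mono) auto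
  ultimately show ?thesis by linarith
qed

lemma writes_at_most_simulation_protocol:
  "writes_at_most k (l * s) (simulation_protocol k l s A c v out)"
proof -
  have "m div s mod k < k" if "m < l * k * s" for m
    using that by (cases "k = 0") auto
  then show ?thesis
    unfolding writes_at_most_def halts_def
    by (auto simp: p_speaker_simulation_protocol bits_by_simulation_protocol
        length_transcript_simulation_protocol split: if_splits intro!: exI[of _ "l * k * s"])
qed

lemma fold_upt_segments:
  assumes "\<And>i. i < N \<Longrightarrow> c i \<le> c (Suc i)"
  shows "fold f [c 0..<c N] = fold (\<lambda>i. fold f [c i..<c (Suc i)]) [0..<N]"
proof -
  have "c 0 \<le> c N \<and> fold f [c 0..<c N] = fold (\<lambda>i. fold f [c i..<c (Suc i)]) [0..<N]"
    using assms
  proof (induction N)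
    case (Suc N)
    then have "c 0 \<le> c N" "c N \<le> c (Suc N)"
      and IH: "fold f [c 0..<c N] = fold (\<lambda>i. fold f [c i..<c (Suc i)]) [0..<N]" by auto
    moreover have "[c 0..<c (Suc N)] = [c 0..<c N] @ [c N..<c (Suc N)]"
      using upt_add_eq_append[OF \<open>c 0 \<le> c N\<close>, of "c (Suc N) - c N"] \<open>c N \<le> c (Suc N)\<close> by simp
    ultimately show ?case by simp
  qed simp
  then show ?thesis by blast
qed

lemma run_pass_segmented_stream:
  assumes seg: "segmented_stream k c v X xs"
  shows "run_pass A j xs q = fold (\<lambda>i. segment_run A c v j i (X ! i)) [0..<k] q"
proof -
  have "zip [0..<length xs] xs = map (\<lambda>p. (p, xs ! p)) [0..<length xs]"
    by (rule nth_equalityI) auto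
  then have "run_pass A j xs q = fold (\<lambda>p q. s_step A j p q (xs ! p)) [0..<length xs] q"
    by (simp add: run_pass_def fold_map comp_def)
  also have "[0..<length xs] = [c 0..<c k]" using seg by (simp add: segmented_stream_def)
  also have "fold (\<lambda>p q. s_step A j p q (xs ! p)) [c 0..<c k]
      = fold (\<lambda>i. fold (\<lambda>p q. s_step A j p q (xs ! p)) [c i..<c (Suc i)]) [0..<k]"
    using seg by (intro fold_upt_segments) (simp add: segmented_stream_def)
  also have "\<dots> = fold (\<lambda>i. segment_run A c v j i (X ! i)) [0..<k]"
    using seg unfolding segment_run_def segmented_stream_def
    by (intro fold_cong ext refl) (simp cong: fold_cong)
  finally show ?thesis .
qed

lemma block_state_pass:
  assumes "0 < k" "i \<le> k"
  shows "block_state k A c v X (j * k + i)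
           = fold (\<lambda>i. segment_run A c v j i (X ! i)) [0..<i] (block_state k A c v X (j * k))"
  using assms(2)
proof (induction i)
  case (Suc i)
  then have "(j * k + i) div k = j" "(j * k + i) mod k = i" by auto
  then show ?case using Suc by simp
qed simp

lemma block_state_eq_salg_state:
  assumes "0 < k" and seg: "segmented_stream k c v X xs"
  shows "block_state k A c v X (l * k) = salg_state A l xs"
proof (induction l)
  case (Suc l)
  have "block_state k A c v X (Suc l * k) = block_state k A c v X (l * k + k)"
    by (simp add: add.commute)
  also have "\<dots> = run_pass A l xs (block_state k A c v X (l * k))"
    using block_state_pass[OF \<open>0 < k\<close> order_refl] run_pass_segmented_stream[OF seg] by simp
  finally show ?case using Suc by (simp add: salg_state_def)
qed (simp add: salg_state_def)

lemma simulation_protocol_output: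
  assumes valid: "valid_salg s A" and "0 < k" and seg: "segmented_stream k c v X xs"
  shows "protocol_output (simulation_protocol k l s A c v out) X = out (salg_state A l xs)"
proof -
  let ?T = "simulation_transcript k l s A c v X"
  have "final_transcript (simulation_protocol k l s A c v out) X = ?T"
    using transcript_simulation_protocol[OF valid order_refl]
    by (simp add: final_transcript_simulation_protocol length_simulation_transcript)
  moreover have "announced_state A s ?T = block_state k A c v X (l * k)"
  proof (cases "s = 0")
    case True
    then show ?thesis
      using block_state_less[OF valid, of k c v X 0] block_state_less[OF valid, of k c v X "l * k"]
      by (simp add: announced_state_def)
  next
    case False
    then show ?thesis
      using announced_state_simulation_transcript[OF valid order_refl, of l k c v X]
      by (simp add: length_simulation_transcript)
  qed
  ultimately show ?thesis
    using block_state_eq_salg_state[OF \<open>0 < k\<close> seg]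
    by (simp add: protocol_output_def simulation_protocol_def)
qed

lemma finite_USD_inputs: "finite (USD_inputs n sz b)"
proof (rule finite_subset)
  show "USD_inputs n sz b \<subseteq> {X. set X \<subseteq> Pow {..<n} \<and> length X = length sz}"
    by (auto simp: USD_inputs_def in_set_conv_nth; blast)
qed (simp add: finite_lists_length_eq)

lemma card_common_uniquely_intersecting:
  assumes X: "X \<in> USD_inputs n sz True" and k: "0 < length sz"
  shows "card ({..<n} \<inter> \<Inter>(set X)) = (if length sz = 1 then sz ! 0 else 1)"
proof -
  obtain x where x: "x < n" "\<And>i. i < length X \<Longrightarrow> x \<in> X ! i"
    and meet: "\<And>i j. i < length X \<Longrightarrow> j < length X \<Longrightarrow> i \<noteq> j \<Longrightarrow> X ! i \<inter> X ! j = {x}"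
    using X unfolding USD_inputs_def uniquely_intersecting_def by auto
  have len: "length X = length sz" and sub0: "X ! 0 \<subseteq> {..<n}" and card0: "card (X ! 0) = sz ! 0"
    using X k unfolding USD_inputs_def by auto
  show ?thesis
  proof (cases "length sz = 1")
    case True
    then have "set X = {X ! 0}" using len by (cases X) auto
    then show ?thesis using True sub0 card0 by (simp add: Int_absorb1)
  next
    case False
    then have "0 < length X" "1 < length X" using len k by linarith+
    then have "X ! 0 \<in> set X" "X ! 1 \<in> set X" by simp_all
    then have "\<Inter>(set X) \<subseteq> X ! 0 \<inter> X ! 1" by blast
    moreover have "x \<in> \<Inter>(set X)" using x(2) by (auto simp: in_set_conv_nth)
    ultimately have "{..<n} \<inter> \<Inter>(set X) = {x}"
      using meet[OF \<open>0 < length X\<close> \<open>1 < length X\<close>] x(1) by auto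
    then show ?thesis using False by simp
  qed
qed

section \<open>Embedding set-disjointness instances into an interval system\<close>

locale interval_reduction =
  fixes n t k :: nat and F :: "nat set list"
  assumes interval_system: "is_interval_system t k F" and n_pos: "0 < n" and k_pos: "0 < k"
begin

definition lo :: "nat \<Rightarrow> nat" where "lo i = Min (F ! i)"
definition hi :: "nat \<Rightarrow> nat" where "hi i = Max (F ! i)"

lemma length_F: "length F = k"
  using interval_system by (simp add: is_interval_system_def)

lemma interval_eq:
  assumes "i < k"
  shows "F ! i = {lo i..hi i}" and lo_le_hi: "lo i \<le> hi i" and hi_less: "hi i < t"
proof -
  have "F ! i \<in> set F" using assms length_F by simp
  moreover have "\<forall>I\<in>set F. \<exists>a b. a \<le> b \<and> b < t \<and> I = {a..b}"
    using interval_system unfolding is_interval_system_def by blast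
  ultimately obtain a b where ab: "a \<le> b" "b < t" "F ! i = {a..b}" by blast
  then have "lo i = a" "hi i = b" unfolding lo_def hi_def by (auto intro: Min_eqI Max_eqI)
  then show "F ! i = {lo i..hi i}" "lo i \<le> hi i" "hi i < t" using ab by auto
qed

lemma hi_less_lo: "i < j \<Longrightarrow> j < k \<Longrightarrow> hi i < lo j"
  using interval_system unfolding is_interval_system_def lo_def hi_def by blast

lemma mem_interval: "i < k \<Longrightarrow> p \<in> F ! i \<longleftrightarrow> lo i \<le> p \<and> p \<le> hi i"
  by (simp add: interval_eq)

lemma interval_less: "i < k \<Longrightarrow> p \<in> F ! i \<Longrightarrow> p < t"
  using hi_less mem_interval by fastforce

lemma finite_interval: "i < k \<Longrightarrow> finite (F ! i)"
  by (simp add: interval_eq)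

lemma card_interval: "i < k \<Longrightarrow> card (F ! i) = Suc (hi i) - lo i"
  by (simp add: interval_eq)

lemma interval_index_unique:
  assumes "i < k" "j < k" "p \<in> F ! i" "p \<in> F ! j"
  shows "i = j"
proof -
  have "lo i \<le> p" "p \<le> hi i" "lo j \<le> p" "p \<le> hi j" using assms mem_interval by auto
  then show ?thesis using hi_less_lo[of i j] hi_less_lo[of j i] assms
    by (cases i j rule: linorder_cases) auto
qed

lemma set_F: "set F = (!) F ` {..<k}"
  using length_F by (auto simp: set_conv_nth)

lemma distinct_F: "distinct F"
proof -
  have "F ! i \<noteq> F ! j" if "i < k" "j < k" "i \<noteq> j" for i j
  proof
    assume "F ! i = F ! j"
    moreover have "lo i \<in> F ! i" using that lo_le_hi by (simp add: interval_eq)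
    ultimately show False using interval_index_unique that by metis
  qed
  then show ?thesis by (simp add: distinct_conv_nth length_F)
qed

lemma USD_inputs_nth:
  assumes "X \<in> USD_inputs n (Sizes F) b" and "i < k"
  shows "X ! i \<subseteq> {..<n}" "card (X ! i) = card (F ! i)" "finite (X ! i)"
proof -
  show "X ! i \<subseteq> {..<n}" and card: "card (X ! i) = card (F ! i)"
    using assms by (auto simp: USD_inputs_def Sizes_def length_F)
  show "finite (X ! i)"
    using card card_interval[OF assms(2)] lo_le_hi[OF assms(2)] by (intro card_ge_0_finite) simp
qed

lemma length_USD_inputs: "X \<in> USD_inputs n (Sizes F) b \<Longrightarrow> length X = k"
  by (simp add: USD_inputs_def Sizes_def length_F)

definition owner :: "nat \<Rightarrow> nat" where
  "owner p = (THE i. i < k \<and> p \<in> F ! i)"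

lemma owner_eq: "i < k \<Longrightarrow> p \<in> F ! i \<Longrightarrow> owner p = i"
  unfolding owner_def by (rule the_equality) (use interval_index_unique in auto)

definition interval_perms :: "(nat \<Rightarrow> nat \<Rightarrow> nat) set" where
  "interval_perms = (\<Pi>\<^sub>E i\<in>{..<k}. {\<pi>. \<pi> permutes {..<card (F ! i)}})"

definition placed_symbol :: "(nat \<Rightarrow> nat \<Rightarrow> nat) \<Rightarrow> nat list \<Rightarrow> nat \<Rightarrow> nat set \<Rightarrow> nat \<Rightarrow> nat" where
  "placed_symbol \<pi> R i Xi p =
     (if p \<in> F ! i then sorted_list_of_set Xi ! \<pi> i (p - lo i) else R ! p)"

(* Player i's set, listed increasingly and reordered by the public permutation \<pi> i, fills
   F ! i; the public stream R fills all positions outside the intervals. *)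
definition embed :: "nat set list \<Rightarrow> (nat \<Rightarrow> nat \<Rightarrow> nat) \<Rightarrow> nat list \<Rightarrow> nat list" where
  "embed X \<pi> R = map (\<lambda>p. if p \<in> \<Union>(set F) then placed_symbol \<pi> R (owner p) (X ! owner p) p else R ! p) [0..<t]"

definition interval_sets :: "nat list \<Rightarrow> nat set list" where
  "interval_sets y = map (\<lambda>I. (!) y ` I) F"

definition usd_streams :: "bool \<Rightarrow> nat list set" where
  "usd_streams b = {y \<in> streams n t. (\<forall>i<k. inj_on ((!) y) (F ! i)) \<and>
                                     interval_sets y \<in> USD_inputs n (Sizes F) b}"

lemma length_embed: "length (embed X \<pi> R) = t"
  by (simp add: embed_def)

lemma nth_embed_interval:
  "i < k \<Longrightarrow> p \<in> F ! i \<Longrightarrow> embed X \<pi> R ! p = sorted_list_of_set (X ! i) ! \<pi> i (p - lo i)"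
  using interval_less[of i p] owner_eq[of i p] nth_mem[of i F]
  by (auto simp: embed_def placed_symbol_def length_F)

lemma nth_embed_uncovered: "p < t \<Longrightarrow> p \<notin> \<Union>(set F) \<Longrightarrow> embed X \<pi> R ! p = R ! p"
  by (simp add: embed_def)

lemma covered_subset: "\<Union>(set F) \<subseteq> {..<t}"
  using interval_less by (auto simp: set_F)

lemma nth_interval_sets: "i < k \<Longrightarrow> interval_sets y ! i = (!) y ` (F ! i)"
  by (simp add: interval_sets_def length_F)

lemma bij_betw_embed_interval:
  assumes X: "X \<in> USD_inputs n (Sizes F) b" and \<pi>: "\<pi> \<in> interval_perms" and i: "i < k"
  shows "bij_betw ((!) (embed X \<pi> R)) (F ! i) (X ! i)"
proof -
  define xs where "xs = sorted_list_of_set (X ! i)"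
  have "bij_betw (\<lambda>p. p - lo i) (F ! i) {..<card (F ! i)}"
    by (rule bij_betwI[where g = "\<lambda>j. lo i + j"]) (auto simp: mem_interval card_interval i)
  moreover have "bij_betw (\<pi> i) {..<card (F ! i)} {..<card (F ! i)}"
    using \<pi> i by (auto simp: interval_perms_def intro: permutes_imp_bij)
  moreover have "bij_betw ((!) xs) {..<card (F ! i)} (X ! i)"
    using USD_inputs_nth[OF X i] unfolding xs_def
    by (metis bij_betw_nth distinct_sorted_list_of_set lessThan_atLeast0 length_sorted_list_of_set
        set_sorted_list_of_set)
  ultimately have "bij_betw ((!) xs \<circ> \<pi> i \<circ> (\<lambda>p. p - lo i)) (F ! i) (X ! i)"
    by (intro bij_betw_trans)
  then show ?thesis
    by (rule bij_betw_cong[THEN iffD1, rotated]) (simp add: nth_embed_interval[OF i] xs_def)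
qed

lemma finite_interval_perms: "finite interval_perms"
  unfolding interval_perms_def by (intro finite_PiE finite_permutations) auto

lemma embed_in_usd_streams:
  assumes X: "X \<in> USD_inputs n (Sizes F) b" and \<pi>: "\<pi> \<in> interval_perms" and R: "R \<in> streams n t"
  shows "embed X \<pi> R \<in> usd_streams b" and "interval_sets (embed X \<pi> R) = X"
proof -
  let ?y = "embed X \<pi> R"
  note bij = bij_betw_embed_interval[OF X \<pi>]
  show sets: "interval_sets ?y = X"
    using bij length_USD_inputs[OF X]
    by (intro nth_equalityI) (auto simp: interval_sets_def length_F bij_betw_def)
  have "?y ! p < n" if "p < t" for p
  proof (cases "p \<in> \<Union>(set F)")
    case True
    then obtain i where i: "i < k" "p \<in> F ! i" by (auto simp: set_F)
    then show ?thesis using bij[OF i(1)] USD_inputs_nth(1)[OF X i(1)] by (auto simp: bij_betw_def)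
  next
    case False
    then show ?thesis using R that nth_embed_uncovered by (simp add: streams_conv_nth)
  qed
  then show "?y \<in> usd_streams b"
    using sets X bij by (auto simp: usd_streams_def streams_conv_nth length_embed bij_betw_def)
qed

definition embedding_perm :: "nat list \<Rightarrow> nat \<Rightarrow> nat \<Rightarrow> nat" where
  "embedding_perm y = (\<lambda>i\<in>{..<k}. \<lambda>j. if j < card (F ! i)
     then the_inv_into {..<card (F ! i)} ((!) (sorted_list_of_set ((!) y ` (F ! i)))) (y ! (lo i + j))
     else j)"

lemma bij_betw_interval_image:
  assumes y: "y \<in> usd_streams b" and i: "i < k"
  shows "bij_betw ((!) (sorted_list_of_set ((!) y ` (F ! i)))) {..<card (F ! i)} ((!) y ` (F ! i))"
    and "bij_betw (\<lambda>j. y ! (lo i + j)) {..<card (F ! i)} ((!) y ` (F ! i))"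
proof -
  have inj: "inj_on ((!) y) (F ! i)" using y i by (simp add: usd_streams_def)
  then show "bij_betw ((!) (sorted_list_of_set ((!) y ` (F ! i)))) {..<card (F ! i)} ((!) y ` (F ! i))"
    using finite_interval[OF i]
    by (metis bij_betw_nth card_image distinct_sorted_list_of_set finite_imageI lessThan_atLeast0
        length_sorted_list_of_set set_sorted_list_of_set)
  have "bij_betw (\<lambda>j. lo i + j) {..<card (F ! i)} (F ! i)"
    by (rule bij_betwI[where g = "\<lambda>p. p - lo i"]) (auto simp: mem_interval card_interval i)
  then have "bij_betw ((!) y \<circ> (\<lambda>j. lo i + j)) {..<card (F ! i)} ((!) y ` (F ! i))"
    using inj_on_imp_bij_betw[OF inj] by (rule bij_betw_trans)
  then show "bij_betw (\<lambda>j. y ! (lo i + j)) {..<card (F ! i)} ((!) y ` (F ! i))"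
    by (simp add: comp_def)
qed

lemma embedding_perm_in_interval_perms:
  assumes y: "y \<in> usd_streams b"
  shows "embedding_perm y \<in> interval_perms"
proof -
  have "embedding_perm y i permutes {..<card (F ! i)}" if i: "i < k" for i
  proof (rule bij_imp_permutes)
    note bij = bij_betw_interval_image[OF y i]
    have "bij_betw (the_inv_into {..<card (F ! i)} ((!) (sorted_list_of_set ((!) y ` (F ! i))))
             \<circ> (\<lambda>j. y ! (lo i + j))) {..<card (F ! i)} {..<card (F ! i)}"
      using bij_betw_trans[OF bij(2) bij_betw_the_inv_into[OF bij(1)]] .
    then show "bij_betw (embedding_perm y i) {..<card (F ! i)} {..<card (F ! i)}"
      by (rule bij_betw_cong[THEN iffD1, rotated]) (simp add: embedding_perm_def i)
  qed (simp add: embedding_perm_def i)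
  then show ?thesis by (auto simp: interval_perms_def embedding_perm_def)
qed

lemma nth_sorted_embedding_perm:
  assumes y: "y \<in> usd_streams b" and i: "i < k" and j: "j < card (F ! i)"
  shows "sorted_list_of_set ((!) y ` (F ! i)) ! embedding_perm y i j = y ! (lo i + j)"
  using f_the_inv_into_f_bij_betw[OF bij_betw_interval_image(1)[OF y i]]
    bij_betw_apply[OF bij_betw_interval_image(2)[OF y i] j[folded lessThan_iff]] i j
  by (simp add: embedding_perm_def)

lemma embedding_perm_unique:
  assumes y: "y \<in> usd_streams b" and \<pi>: "\<pi> \<in> interval_perms"
    and embed: "embed (interval_sets y) \<pi> R = y"
  shows "\<pi> = embedding_perm y"
proof (intro ext)
  fix i j
  show "\<pi> i j = embedding_perm y i j"
  proof (cases "i < k")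
    case i: True
    then have perm: "\<pi> i permutes {..<card (F ! i)}" using \<pi> by (auto simp: interval_perms_def)
    show ?thesis
    proof (cases "j < card (F ! i)")
      case j: True
      define xs where "xs = sorted_list_of_set ((!) y ` (F ! i))"
      have inj: "inj_on ((!) xs) {..<card (F ! i)}"
        unfolding xs_def using bij_betw_interval_image(1)[OF y i] by (rule bij_betw_imp_inj_on)
      have "lo i + j \<in> F ! i" using i j by (simp add: mem_interval card_interval)
      then have "y ! (lo i + j) = xs ! \<pi> i j"
        using nth_embed_interval[OF i, of "lo i + j" "interval_sets y" \<pi> R] embed
        by (simp add: nth_interval_sets[OF i] xs_def)
      moreover have "\<pi> i j \<in> {..<card (F ! i)}" using permutes_in_image[OF perm, of j] j by simp
      ultimately have "the_inv_into {..<card (F ! i)} ((!) xs) (y ! (lo i + j)) = \<pi> i j"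
        using the_inv_into_f_f[OF inj] by presburger
      moreover have "embedding_perm y i j = the_inv_into {..<card (F ! i)} ((!) xs) (y ! (lo i + j))"
        using i j by (simp add: embedding_perm_def xs_def)
      ultimately show ?thesis by simp
    next
      case False
      then show ?thesis using i perm by (simp add: embedding_perm_def permutes_not_in)
    qed
  next
    case False
    then have "\<pi> i = undefined" using \<pi> unfolding interval_perms_def by (intro PiE_arb) auto
    then show ?thesis using False by (simp add: embedding_perm_def)
  qed
qed

lemma embed_embedding_perm:
  assumes y: "y \<in> usd_streams b" and R: "R \<in> streams_agreeing n t (\<Union>(set F)) y"
  shows "embed (interval_sets y) (embedding_perm y) R = y"
proof (rule nth_equalityI)
  show "length (embed (interval_sets y) (embedding_perm y) R) = length y"
    using y by (simp add: length_embed usd_streams_def streams_def)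
  fix p assume "p < length (embed (interval_sets y) (embedding_perm y) R)"
  then have p: "p < t" by (simp add: length_embed)
  show "embed (interval_sets y) (embedding_perm y) R ! p = y ! p"
  proof (cases "p \<in> \<Union>(set F)")
    case True
    then obtain i where i: "i < k" "p \<in> F ! i" by (auto simp: set_F)
    then have "lo i \<le> p" "p - lo i < card (F ! i)" by (auto simp: mem_interval card_interval)
    then show ?thesis
      using nth_embed_interval[OF i] nth_sorted_embedding_perm[OF y i(1), of "p - lo i"]
      by (simp add: nth_interval_sets[OF i(1)])
  next
    case False
    then show ?thesis using R p nth_embed_uncovered by (simp add: streams_agreeing_def)
  qed
qed

lemma embed_fibre:
  assumes y: "y \<in> usd_streams b"
  shows "{d \<in> USD_inputs n (Sizes F) b \<times> interval_perms \<times> streams n t. (\<lambda>(X, \<pi>, R). embed X \<pi> R) d = y}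
       = (\<lambda>R. (interval_sets y, embedding_perm y, R)) ` streams_agreeing n t (\<Union>(set F)) y"
proof (intro equalityI subsetI)
  fix d assume "d \<in> {d \<in> USD_inputs n (Sizes F) b \<times> interval_perms \<times> streams n t.
                        (\<lambda>(X, \<pi>, R). embed X \<pi> R) d = y}"
  then obtain X \<pi> R where d: "d = (X, \<pi>, R)" and X: "X \<in> USD_inputs n (Sizes F) b"
    and \<pi>: "\<pi> \<in> interval_perms" and R: "R \<in> streams n t" and e: "embed X \<pi> R = y" by auto
  have "X = interval_sets y" using embed_in_usd_streams(2)[OF X \<pi> R] e by simp
  moreover from this have "\<pi> = embedding_perm y" using embedding_perm_unique[OF y \<pi>] e by simp
  moreover have "R \<in> streams_agreeing n t (\<Union>(set F)) y"
    using R e nth_embed_uncovered by (auto simp: streams_agreeing_def)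
  ultimately show "d \<in> (\<lambda>R. (interval_sets y, embedding_perm y, R)) ` streams_agreeing n t (\<Union>(set F)) y"
    using d by blast
next
  fix d assume "d \<in> (\<lambda>R. (interval_sets y, embedding_perm y, R)) ` streams_agreeing n t (\<Union>(set F)) y"
  then obtain R where d: "d = (interval_sets y, embedding_perm y, R)"
    and R: "R \<in> streams_agreeing n t (\<Union>(set F)) y" by blast
  moreover have "interval_sets y \<in> USD_inputs n (Sizes F) b" using y by (simp add: usd_streams_def)
  moreover have "R \<in> streams n t" using R by (simp add: streams_agreeing_def)
  ultimately show "d \<in> {d \<in> USD_inputs n (Sizes F) b \<times> interval_perms \<times> streams n t.
                          (\<lambda>(X, \<pi>, R). embed X \<pi> R) d = y}"
    using embedding_perm_in_interval_perms[OF y] embed_embedding_perm[OF y R] by simp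
qed

lemma map_pmf_embed:
  assumes "usd_streams b \<noteq> {}"
  shows "map_pmf (\<lambda>(X, \<pi>, R). embed X \<pi> R)
           (pmf_of_set (USD_inputs n (Sizes F) b \<times> interval_perms \<times> streams n t))
         = pmf_of_set (usd_streams b)"
proof -
  let ?D = "USD_inputs n (Sizes F) b \<times> interval_perms \<times> streams n t"
    and ?f = "\<lambda>(X, \<pi>, R). embed X \<pi> R"
  have fibre: "y \<in> usd_streams b \<Longrightarrow> (interval_sets y, embedding_perm y, y) \<in> {d \<in> ?D. ?f d = y}" for y
    unfolding embed_fibre by (auto simp: usd_streams_def intro: self_in_streams_agreeing)
  have image: "?f ` ?D = usd_streams b"
    using embed_in_usd_streams(1) fibre by force
  have "map_pmf ?f (pmf_of_set ?D) = pmf_of_set (?f ` ?D)"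
  proof (rule map_pmf_of_set_equal_fibres)
    show "finite ?D" using finite_USD_inputs finite_interval_perms finite_streams by blast
    show "?D \<noteq> {}" using fibre assms by blast
    show "card {d \<in> ?D. ?f d = y} = n ^ card (\<Union>(set F))" if "y \<in> ?f ` ?D" for y
    proof -
      have y: "y \<in> usd_streams b" using that image by simp
      have "card {d \<in> ?D. ?f d = y} = card (streams_agreeing n t (\<Union>(set F)) y)"
        unfolding embed_fibre[OF y] by (rule card_image) (auto simp: inj_on_def)
      then show ?thesis
        using card_streams_agreeing[OF covered_subset] y by (simp add: usd_streams_def)
    qed
  qed
  then show ?thesis using image by simp
qed

lemma in_usd_streamsI:
  assumes y: "y \<in> streams n t" and inj: "\<And>i. i < k \<Longrightarrow> inj_on ((!) y) (F ! i)"
    and meet: "if b then uniquely_intersecting n (interval_sets y) else pw_disjoint (interval_sets y)"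
  shows "y \<in> usd_streams b"
proof -
  have "(!) y ` (F ! i) \<subseteq> {..<n}" if "i < k" for i
    using y interval_less[OF that] by (auto simp: streams_conv_nth)
  moreover have "card ((!) y ` (F ! i)) = card (F ! i)" if "i < k" for i
    using card_image[OF inj[OF that]] .
  ultimately have "interval_sets y \<in> USD_inputs n (Sizes F) b"
    using meet by (auto simp: USD_inputs_def interval_sets_def Sizes_def length_F)
  then show ?thesis using y inj by (simp add: usd_streams_def)
qed

lemma distinct_in_usd_streams_False:
  assumes Y: "Y \<in> streams n t" and dist: "distinct Y"
  shows "Y \<in> usd_streams False"
proof (rule in_usd_streamsI[OF Y])
  have len: "length Y = t" using Y by (simp add: streams_def)
  have inj: "inj_on ((!) Y) {..<t}" using dist len by (simp add: inj_on_def nth_eq_iff_index_eq)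
  then show "inj_on ((!) Y) (F ! i)" if "i < k" for i
    using interval_less[OF that] by (auto intro: inj_on_subset)
  have "(!) Y ` (F ! i) \<inter> (!) Y ` (F ! j) = {}" if "i < k" "j < k" "i \<noteq> j" for i j
    using inj interval_less interval_index_unique that by (auto simp: inj_on_def) blast
  then show "if False then uniquely_intersecting n (interval_sets Y) else pw_disjoint (interval_sets Y)"
    by (simp add: pw_disjoint_def interval_sets_def length_F)
qed

section \<open>The planted distribution\<close>

definition placements :: "(nat set \<Rightarrow> nat) set" where
  "placements = PiE_dflt (set F) 0 (\<lambda>I. I)"

definition plant :: "nat \<Rightarrow> (nat set \<Rightarrow> nat) \<Rightarrow> nat list \<Rightarrow> nat list" where
  "plant x a Y = map (\<lambda>i. if \<exists>I\<in>set F. a I = i then x else Y ! i) [0..<t]"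

definition planted_space :: "(nat \<times> (nat set \<Rightarrow> nat) \<times> nat list) set" where
  "planted_space = {..<n} \<times> placements \<times> streams n t"

lemma finite_placements: "finite placements"
  unfolding placements_def using finite_interval by (intro finite_PiE_dflt) (auto simp: set_F)

lemma placements_nonempty: "placements \<noteq> {}"
  unfolding placements_def using interval_eq lo_le_hi by (auto simp: set_F)

lemma finite_planted_space: "finite planted_space"
  unfolding planted_space_def using finite_placements finite_streams by blast

lemma planted_space_nonempty: "planted_space \<noteq> {}"
  unfolding planted_space_def using placements_nonempty replicate_in_streams n_pos by blast

lemma planted_eq_map_pmf: "planted n t F = map_pmf (\<lambda>(x, a, Y). plant x a Y) (pmf_of_set planted_space)"
proof -
  have "Pi_pmf (set F) 0 pmf_of_set = pmf_of_set placements"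
    unfolding placements_def using finite_interval interval_eq lo_le_hi
    by (intro Pi_pmf_of_set) (auto simp: set_F)
  moreover have "pmf_of_set planted_space
      = pair_pmf (pmf_of_set {..<n}) (pair_pmf (pmf_of_set placements) (pmf_of_set (streams n t)))"
  proof -
    have ne: "{..<n} \<noteq> {}" "streams n t \<noteq> {}" using n_pos replicate_in_streams by auto
    have "pair_pmf (pmf_of_set placements) (pmf_of_set (streams n t)) = pmf_of_set (placements \<times> streams n t)"
      using finite_placements placements_nonempty finite_streams ne by (intro pair_pmf_of_set)
    moreover have "pair_pmf (pmf_of_set {..<n}) (pmf_of_set (placements \<times> streams n t)) = pmf_of_set planted_space"
      unfolding planted_space_def
      using finite_placements placements_nonempty finite_streams ne by (intro pair_pmf_of_set) auto
    ultimately show ?thesis by simp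
  qed
  ultimately show ?thesis
    by (simp add: planted_def uniform_stream_def plant_def pair_pmf_def map_bind_pmf
        bind_assoc_pmf bind_return_pmf)
qed

lemma placement_mem: "a \<in> placements \<Longrightarrow> I \<in> set F \<Longrightarrow> a I \<in> I"
  by (simp add: placements_def PiE_dflt_def)

lemma placement_index:
  assumes a: "a \<in> placements" and i: "i < k" and p: "p \<in> F ! i"
  shows "(\<exists>I\<in>set F. a I = p) \<longleftrightarrow> p = a (F ! i)"
  using placement_mem[OF a] interval_index_unique[OF _ i _ p] i by (auto simp: set_F)

lemma nth_plant: "p < t \<Longrightarrow> plant x a Y ! p = (if \<exists>I\<in>set F. a I = p then x else Y ! p)"
  by (simp add: plant_def)

lemma length_plant: "length (plant x a Y) = t"
  by (simp add: plant_def)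

lemma nth_plant_interval:
  "a \<in> placements \<Longrightarrow> i < k \<Longrightarrow> p \<in> F ! i \<Longrightarrow> plant x a Y ! p = (if p = a (F ! i) then x else Y ! p)"
  using nth_plant[OF interval_less] placement_index by metis

lemma nth_plant_eq_iff:
  assumes a: "a \<in> placements" and Y: "Y \<in> streams n t" and dist: "distinct Y" and fresh: "x \<notin> set Y"
    and i: "i < k" "p \<in> F ! i" and j: "j < k" "q \<in> F ! j"
  shows "plant x a Y ! p = plant x a Y ! q \<longleftrightarrow> p = q \<or> p = a (F ! i) \<and> q = a (F ! j)"
proof -
  have len: "length Y = t" using Y by (simp add: streams_def)
  have "p < t" "q < t" using i j interval_less by auto
  then have "Y ! p = Y ! q \<longleftrightarrow> p = q" "Y ! p \<noteq> x" "Y ! q \<noteq> x"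
    using dist fresh len nth_mem by (auto simp: nth_eq_iff_index_eq)
  then show ?thesis
    using nth_plant_interval[OF a i, where x = x and Y = Y] nth_plant_interval[OF a j, where x = x and Y = Y]
      interval_index_unique[OF i(1) j(1)] i j
    by auto
qed

lemma plant_in_usd_streams_True:
  assumes x: "x < n" and a: "a \<in> placements" and Y: "Y \<in> streams n t"
    and dist: "distinct Y" and fresh: "x \<notin> set Y"
  shows "plant x a Y \<in> usd_streams True"
proof (rule in_usd_streamsI)
  let ?y = "plant x a Y"
  note eq_iff = nth_plant_eq_iff[OF a Y dist fresh]
  have needle: "a (F ! i) \<in> F ! i" "?y ! a (F ! i) = x" if "i < k" for i
    using placement_mem[OF a, of "F ! i"] nth_plant_interval[OF a that] that by (auto simp: set_F)
  show "?y \<in> streams n t"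
    using x Y by (auto simp: streams_conv_nth length_plant nth_plant)
  show "inj_on ((!) ?y) (F ! i)" if i: "i < k" for i
    using eq_iff[OF i _ i] by (auto simp: inj_on_def)
  have "(!) ?y ` (F ! i) \<inter> (!) ?y ` (F ! j) = {x}" if ij: "i < k" "j < k" "i \<noteq> j" for i j
  proof (intro equalityI subsetI)
    fix v assume "v \<in> (!) ?y ` (F ! i) \<inter> (!) ?y ` (F ! j)"
    then obtain p q where pq: "p \<in> F ! i" "q \<in> F ! j" "v = ?y ! p" "v = ?y ! q" by auto
    moreover have "p \<noteq> q" using pq(1,2) interval_index_unique ij by blast
    ultimately show "v \<in> {x}" using eq_iff[OF ij(1) pq(1) ij(2) pq(2)] needle ij by auto
  next
    fix v assume "v \<in> {x}"
    then show "v \<in> (!) ?y ` (F ! i) \<inter> (!) ?y ` (F ! j)"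
      using needle ij by (auto intro!: rev_image_eqI)
  qed
  moreover have "x \<in> (!) ?y ` (F ! i)" if "i < k" for i
    using needle[OF that] by (auto intro!: rev_image_eqI)
  ultimately show "if True then uniquely_intersecting n (interval_sets ?y) else pw_disjoint (interval_sets ?y)"
    using x by (auto simp: uniquely_intersecting_def interval_sets_def length_F intro!: exI[of _ x])
qed

lemma card_placement_image:
  assumes a: "a \<in> placements"
  shows "card (a ` set F) = k" and "a ` set F \<subseteq> {..<t}"
proof -
  have "inj_on a (set F)"
  proof (rule inj_onI)
    fix I J assume IJ: "I \<in> set F" "J \<in> set F" "a I = a J"
    then obtain i j where ij: "i < k" "I = F ! i" "j < k" "J = F ! j" by (auto simp: set_F)
    have "a I \<in> F ! i" using placement_mem[OF a IJ(1)] ij(2) by simp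
    moreover have "a J \<in> F ! j" using placement_mem[OF a IJ(2)] ij(4) by simp
    ultimately show "I = J" using interval_index_unique ij IJ(3) by metis
  qed
  then show "card (a ` set F) = k" using distinct_F length_F by (simp add: card_image distinct_card)
  show "a ` set F \<subseteq> {..<t}" using placement_mem[OF a] interval_less by (auto simp: set_F)
qed

definition common_symbols :: "nat list \<Rightarrow> nat set" where
  "common_symbols y = {..<n} \<inter> \<Inter>(set (interval_sets y))"

definition needle_placement :: "nat list \<Rightarrow> nat \<Rightarrow> nat set \<Rightarrow> nat" where
  "needle_placement y x = (\<lambda>I. if I \<in> set F then THE p. p \<in> I \<and> y ! p = x else 0)"

lemma mem_common_symbols: "x \<in> common_symbols y \<longleftrightarrow> x < n \<and> (\<forall>I\<in>set F. x \<in> (!) y ` I)"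
  by (auto simp: common_symbols_def interval_sets_def)

lemma needle_placement_spec:
  assumes y: "y \<in> usd_streams b" and x: "x \<in> common_symbols y" and I: "I \<in> set F"
  shows "needle_placement y x I \<in> I" and "y ! needle_placement y x I = x"
    and "\<And>p. p \<in> I \<Longrightarrow> y ! p = x \<Longrightarrow> p = needle_placement y x I"
proof -
  have "inj_on ((!) y) I" using y I by (auto simp: usd_streams_def set_F)
  moreover obtain p where "p \<in> I" "y ! p = x" using x I by (auto simp: mem_common_symbols)
  ultimately have "\<exists>!p. p \<in> I \<and> y ! p = x" by (auto dest: inj_onD)
  then show "needle_placement y x I \<in> I" "y ! needle_placement y x I = x"
    "\<And>p. p \<in> I \<Longrightarrow> y ! p = x \<Longrightarrow> p = needle_placement y x I"
    using I theI'[of "\<lambda>p. p \<in> I \<and> y ! p = x"] by (auto simp: needle_placement_def)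
qed

lemma needle_placement_in_placements:
  "y \<in> usd_streams b \<Longrightarrow> x \<in> common_symbols y \<Longrightarrow> needle_placement y x \<in> placements"
  using needle_placement_spec(1) by (auto simp: placements_def PiE_dflt_def needle_placement_def)

lemma plant_needle_placement:
  assumes y: "y \<in> usd_streams b" and x: "x \<in> common_symbols y"
    and Y: "Y \<in> streams_agreeing n t (needle_placement y x ` set F) y"
  shows "plant x (needle_placement y x) Y = y"
proof (rule nth_equalityI)
  show "length (plant x (needle_placement y x) Y) = length y"
    using y by (simp add: length_plant usd_streams_def streams_def)
  show "plant x (needle_placement y x) Y ! p = y ! p" if "p < length (plant x (needle_placement y x) Y)" for p
    using that Y needle_placement_spec(2)[OF y x] by (auto simp: length_plant nth_plant streams_agreeing_def)
qed

lemma plant_fibre: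
  assumes y: "y \<in> usd_streams b"
  shows "{\<omega> \<in> planted_space. (\<lambda>(x, a, Y). plant x a Y) \<omega> = y}
       = (\<lambda>(x, Y). (x, needle_placement y x, Y)) `
           (SIGMA x:common_symbols y. streams_agreeing n t (needle_placement y x ` set F) y)"
proof (intro equalityI subsetI)
  fix \<omega> assume "\<omega> \<in> {\<omega> \<in> planted_space. (\<lambda>(x, a, Y). plant x a Y) \<omega> = y}"
  then obtain x a Y where \<omega>: "\<omega> = (x, a, Y)" and x: "x < n" and a: "a \<in> placements"
    and Y: "Y \<in> streams n t" and e: "plant x a Y = y" by (auto simp: planted_space_def)
  have y_needle: "y ! a I = x" if "I \<in> set F" for I
    using e nth_plant[of "a I" x a Y] placement_mem[OF a that] interval_less that
    by (auto simp: set_F)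
  then have common: "x \<in> common_symbols y"
    using x placement_mem[OF a] by (auto simp: mem_common_symbols)
  have "a = needle_placement y x"
  proof
    fix I show "a I = needle_placement y x I"
      using needle_placement_spec(3)[OF y common, of I "a I"] placement_mem[OF a, of I] y_needle a
      by (cases "I \<in> set F") (auto simp: needle_placement_def placements_def PiE_dflt_def)
  qed
  moreover have "Y \<in> streams_agreeing n t (a ` set F) y"
    using Y e by (auto simp: streams_agreeing_def nth_plant)
  ultimately show "\<omega> \<in> (\<lambda>(x, Y). (x, needle_placement y x, Y)) `
      (SIGMA x:common_symbols y. streams_agreeing n t (needle_placement y x ` set F) y)"
    using \<omega> common by auto
next
  fix \<omega> assume "\<omega> \<in> (\<lambda>(x, Y). (x, needle_placement y x, Y)) `
      (SIGMA x:common_symbols y. streams_agreeing n t (needle_placement y x ` set F) y)"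
  then obtain x Y where \<omega>: "\<omega> = (x, needle_placement y x, Y)" and x: "x \<in> common_symbols y"
    and Y: "Y \<in> streams_agreeing n t (needle_placement y x ` set F) y" by auto
  from plant_needle_placement[OF y x Y] show "\<omega> \<in> {\<omega> \<in> planted_space. (\<lambda>(x, a, Y). plant x a Y) \<omega> = y}"
    using \<omega> x Y needle_placement_in_placements[OF y x]
    by (auto simp: planted_space_def mem_common_symbols streams_agreeing_def)
qed

(* For k \<ge> 2 the needle is the unique common symbol; a single interval may hide it anywhere. *)
lemma card_common_symbols:
  assumes y: "y \<in> usd_streams True"
  shows "card (common_symbols y) = (if k = 1 then card (F ! 0) else 1)"
  using card_common_uniquely_intersecting[of "interval_sets y" n "Sizes F"] y k_pos
  by (simp add: usd_streams_def common_symbols_def Sizes_def length_F)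

lemma card_plant_fibre:
  assumes y: "y \<in> usd_streams True"
  shows "card {\<omega> \<in> planted_space. (\<lambda>(x, a, Y). plant x a Y) \<omega> = y}
           = (if k = 1 then card (F ! 0) else 1) * n ^ k"
proof -
  let ?S = "SIGMA x:common_symbols y. streams_agreeing n t (needle_placement y x ` set F) y"
  have "card {\<omega> \<in> planted_space. (\<lambda>(x, a, Y). plant x a Y) \<omega> = y} = card ?S"
    unfolding plant_fibre[OF y] by (rule card_image) (auto simp: inj_on_def)
  also have "\<dots> = (\<Sum>x\<in>common_symbols y. card (streams_agreeing n t (needle_placement y x ` set F) y))"
    by (rule card_SigmaI)
       (auto simp: common_symbols_def streams_agreeing_def intro: finite_subset[OF _ finite_streams])
  also have "\<dots> = card (common_symbols y) * n ^ k"
    using card_streams_agreeing card_placement_image[OF needle_placement_in_placements[OF y]] y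
    by (simp add: usd_streams_def)
  finally show ?thesis using card_common_symbols[OF y] by simp
qed

definition good_planted :: "(nat \<times> (nat set \<Rightarrow> nat) \<times> nat list) set" where
  "good_planted = {\<omega> \<in> planted_space. (\<lambda>(x, a, Y). plant x a Y) \<omega> \<in> usd_streams True}"

lemma map_pmf_plant_good_planted:
  assumes "good_planted \<noteq> {}"
  shows "map_pmf (\<lambda>(x, a, Y). plant x a Y) (pmf_of_set good_planted) = pmf_of_set (usd_streams True)"
proof -
  let ?f = "\<lambda>(x, a, Y). plant x a Y"
  have fibre: "{\<omega> \<in> good_planted. ?f \<omega> = y} = {\<omega> \<in> planted_space. ?f \<omega> = y}"
    if "y \<in> usd_streams True" for y
    using that by (auto simp: good_planted_def)
  have "usd_streams True \<subseteq> ?f ` good_planted"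
  proof
    fix y assume y: "y \<in> usd_streams True"
    then have "0 < card (common_symbols y)"
      using card_common_symbols[OF y] card_interval[OF k_pos] lo_le_hi[OF k_pos] by simp
    then obtain x where "x \<in> common_symbols y" by (auto simp: card_gt_0_iff)
    then have "(x, needle_placement y x, y) \<in> {\<omega> \<in> planted_space. ?f \<omega> = y}"
      using y unfolding plant_fibre[OF y]
      by (auto intro!: self_in_streams_agreeing simp: usd_streams_def)
    then show "y \<in> ?f ` good_planted" using fibre[OF y] by force
  qed
  then have image: "?f ` good_planted = usd_streams True" by (auto simp: good_planted_def)
  have "map_pmf ?f (pmf_of_set good_planted) = pmf_of_set (?f ` good_planted)"
    using finite_planted_space assms fibre card_plant_fibre image
    by (intro map_pmf_of_set_equal_fibres) (auto simp: good_planted_def)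
  then show ?thesis using image by simp
qed

lemma card_streams_not_usd_False: "n * card (streams n t - usd_streams False) \<le> t * t * card (streams n t)"
proof -
  let ?C = "\<lambda>(p, q). {Y \<in> streams n t. p \<noteq> q \<and> Y ! p = Y ! q}"
  have "streams n t - usd_streams False \<subseteq> (\<Union>pq\<in>{..<t} \<times> {..<t}. ?C pq)"
    using distinct_in_usd_streams_False by (fastforce simp: distinct_conv_nth streams_def)
  then have "n * card (streams n t - usd_streams False) \<le> n * card (\<Union>pq\<in>{..<t} \<times> {..<t}. ?C pq)"
    using finite_streams by (intro mult_le_mono2 card_mono) auto
  also have "\<dots> \<le> card ({..<t} \<times> {..<t}) * card (streams n t)"
  proof (intro card_UN_le_uniform)
    fix pq assume "pq \<in> {..<t} \<times> {..<t}"
    then obtain p q where pq: "pq = (p, q)" "p < t" "q < t" by auto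
    show "n * card (?C pq) \<le> card (streams n t)"
    proof (cases "p = q")
      case False
      then show ?thesis using card_streams_collision[OF pq(2,3) False, of n] pq(1) by simp
    qed (simp add: pq)
  qed simp
  finally show ?thesis by (simp add: card_cartesian_product)
qed

lemma card_planted_space:
  "card planted_space = n * (card placements * card (streams n t))"
  by (simp add: planted_space_def card_cartesian_product)

lemma card_planted_space_collision:
  assumes "p < t" "q < t" "p \<noteq> q"
  shows "n * card {(x, a, Y) \<in> planted_space. Y ! p = Y ! q} = card planted_space"
proof -
  have "{(x, a, Y) \<in> planted_space. Y ! p = Y ! q}
      = {..<n} \<times> placements \<times> {Y \<in> streams n t. Y ! p = Y ! q}"
    by (auto simp: planted_space_def)
  then show ?thesis
    using card_streams_collision[OF assms, of n] by (simp add: card_cartesian_product card_planted_space)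
qed

lemma card_planted_space_hit:
  assumes "p < t"
  shows "n * card {(x, a, Y) \<in> planted_space. Y ! p = x} = card planted_space"
proof -
  have "{(x, a, Y) \<in> planted_space. Y ! p = x} = (\<lambda>(a, Y). (Y ! p, a, Y)) ` (placements \<times> streams n t)"
    using assms by (auto simp: planted_space_def streams_conv_nth image_iff)
  moreover have "inj_on (\<lambda>(a, Y). (Y ! p, a, Y)) (placements \<times> streams n t)"
    by (auto simp: inj_on_def)
  ultimately show ?thesis by (simp add: card_image card_cartesian_product card_planted_space)
qed

lemma card_planted_space_not_good:
  "n * card (planted_space - good_planted) \<le> (t * t + t) * card planted_space"
proof -
  let ?C = "\<lambda>(p, q). {(x, a, Y) \<in> planted_space. p \<noteq> q \<and> Y ! p = Y ! q}"
    and ?H = "\<lambda>p. {(x, a, Y) \<in> planted_space. Y ! p = x}"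
  have "planted_space - good_planted \<subseteq> (\<Union>pq\<in>{..<t} \<times> {..<t}. ?C pq) \<union> (\<Union>p\<in>{..<t}. ?H p)"
  proof
    fix \<omega> assume \<omega>: "\<omega> \<in> planted_space - good_planted"
    then obtain x a Y where \<omega>_eq: "\<omega> = (x, a, Y)" and x: "x < n" and a: "a \<in> placements"
      and Y: "Y \<in> streams n t" by (auto simp: planted_space_def)
    then have "\<not> (distinct Y \<and> x \<notin> set Y)"
      using \<omega> plant_in_usd_streams_True by (auto simp: good_planted_def)
    then show "\<omega> \<in> (\<Union>pq\<in>{..<t} \<times> {..<t}. ?C pq) \<union> (\<Union>p\<in>{..<t}. ?H p)"
      using \<omega> \<omega>_eq Y by (fastforce simp: distinct_conv_nth in_set_conv_nth streams_def)
  qed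
  then have "n * card (planted_space - good_planted)
      \<le> n * card ((\<Union>pq\<in>{..<t} \<times> {..<t}. ?C pq) \<union> (\<Union>p\<in>{..<t}. ?H p))"
    by (intro mult_le_mono2 card_mono) (auto intro!: finite_subset[OF _ finite_planted_space])
  also have "\<dots> \<le> n * card (\<Union>pq\<in>{..<t} \<times> {..<t}. ?C pq) + n * card (\<Union>p\<in>{..<t}. ?H p)"
    by (simp add: card_Un_le flip: add_mult_distrib2)
  also have "\<dots> \<le> card ({..<t} \<times> {..<t}) * card planted_space + card {..<t} * card planted_space"
  proof (intro add_mono card_UN_le_uniform)
    fix pq assume "pq \<in> {..<t} \<times> {..<t}"
    then obtain p q where pq: "pq = (p, q)" "p < t" "q < t" by auto
    show "n * card (?C pq) \<le> card planted_space"
      using card_planted_space_collision[OF pq(2,3)] by (cases "p = q") (simp_all add: pq(1) split_def)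
  qed (simp_all add: card_planted_space_hit)
  finally show ?thesis by (simp add: card_cartesian_product algebra_simps)
qed

lemma usd_streams_False_close:
  "\<bar>measure_pmf.prob (pmf_of_set (usd_streams False)) E - measure_pmf.prob (uniform_stream n t) E\<bar>
     \<le> real t * real t / real n"
proof -
  have "\<bar>measure_pmf.prob (pmf_of_set (usd_streams False)) E
          - measure_pmf.prob (map_pmf id (pmf_of_set (streams n t))) E\<bar> \<le> real (t * t) / n"
    using card_streams_not_usd_False finite_streams replicate_in_streams[OF n_pos] n_pos
    by (intro prob_map_pmf_of_set_subset_close)
       (auto simp: usd_streams_def pmf.map_id simp flip: of_nat_mult)
  then show ?thesis by (simp add: uniform_stream_def pmf.map_id)
qed

lemma usd_streams_True_close:
  "\<bar>measure_pmf.prob (pmf_of_set (usd_streams True)) E - measure_pmf.prob (planted n t F) E\<bar>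
     \<le> (real t * real t + real t) / real n"
proof -
  have "real n * card (planted_space - good_planted) \<le> real (t * t + t) * card planted_space"
    using card_planted_space_not_good by (metis of_nat_le_iff of_nat_mult)
  then have "\<bar>measure_pmf.prob (pmf_of_set (usd_streams True)) E
      - measure_pmf.prob (map_pmf (\<lambda>(x, a, Y). plant x a Y) (pmf_of_set planted_space)) E\<bar>
      \<le> real (t * t + t) / n"
    using finite_planted_space planted_space_nonempty n_pos map_pmf_plant_good_planted
    by (intro prob_map_pmf_of_set_subset_close[where G = good_planted]) (auto simp: good_planted_def)
  then show ?thesis by (simp add: planted_eq_map_pmf)
qed

lemma usd_streams_nonempty:
  assumes "t * t + t < n"
  shows "usd_streams True \<noteq> {}" and "usd_streams False \<noteq> {}"
proof -
  have "0 < card planted_space" "0 < card (streams n t)"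
    using finite_planted_space planted_space_nonempty finite_streams replicate_in_streams[OF n_pos]
    by (auto simp: card_gt_0_iff)
  then have "good_planted \<noteq> {}" "streams n t - usd_streams False \<noteq> streams n t"
    using card_planted_space_not_good card_streams_not_usd_False assms by auto
  then show "usd_streams True \<noteq> {}" "usd_streams False \<noteq> {}"
    by (auto simp: good_planted_def)
qed

section \<open>The reduction\<close>

(* Player i's segment boundary i ..< boundary (Suc i) contains F ! i and meets no other interval. *)
definition boundary :: "nat \<Rightarrow> nat" where
  "boundary i = (if i = 0 then 0 else if i < k then lo i else t)"

lemma boundary_mono: "i < k \<Longrightarrow> boundary i \<le> boundary (Suc i)"
  using hi_less_lo[of i "Suc i"] hi_less[of i] lo_le_hi[of i] by (auto simp: boundary_def)

lemma segment_less: "i < k \<Longrightarrow> p < boundary (Suc i) \<Longrightarrow> p < t"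
  using hi_less[of "Suc i"] lo_le_hi[of "Suc i"] by (auto simp: boundary_def split: if_splits)

lemma segment_meets_only_own_interval:
  assumes i: "i < k" and p: "boundary i \<le> p" "p < boundary (Suc i)" and j: "j < k" "p \<in> F ! j"
  shows "j = i"
proof (rule ccontr)
  assume "j \<noteq> i"
  have "lo j \<le> p" "p \<le> hi j" using j mem_interval by auto
  consider "j < i" | "i < j" using \<open>j \<noteq> i\<close> by linarith
  then show False
  proof cases
    case 1
    then show False using hi_less_lo[OF 1 i] p(1) \<open>p \<le> hi j\<close> i by (simp add: boundary_def)
  next
    case 2
    then have "Suc i < k" using j(1) by linarith
    moreover have "lo (Suc i) \<le> lo j"
    proof (cases "Suc i = j")
      case False
      then show ?thesis using 2 j(1) hi_less_lo[of "Suc i" j] lo_le_hi[of "Suc i"] by simp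
    qed simp
    ultimately show False using p(2) \<open>lo j \<le> p\<close> by (simp add: boundary_def)
  qed
qed

lemma segmented_stream_embed: "segmented_stream k boundary (placed_symbol \<pi> R) X (embed X \<pi> R)"
proof -
  have "embed X \<pi> R ! p = placed_symbol \<pi> R i (X ! i) p"
    if i: "i < k" and p: "boundary i \<le> p" "p < boundary (Suc i)" for i p
  proof -
    have "p \<in> \<Union>(set F) \<longleftrightarrow> p \<in> F ! i"
      using segment_meets_only_own_interval[OF i p] i by (auto simp: set_F)
    then show ?thesis
      using segment_less[OF i p(2)] owner_eq[OF i] by (simp add: embed_def placed_symbol_def)
  qed
  then show ?thesis
    using boundary_mono k_pos by (simp add: segmented_stream_def boundary_def length_embed)
qed

(* The algorithm outputs True on Uniform, which corresponds to disjoint inputs, hence the negation. *)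
definition reduction_protocol :: "nat \<Rightarrow> nat \<Rightarrow> salg \<Rightarrow> (nat \<Rightarrow> nat \<Rightarrow> nat) \<Rightarrow> nat list \<Rightarrow> protocol" where
  "reduction_protocol l s A \<pi> R =
     simulation_protocol k l s A boundary (placed_symbol \<pi> R) (\<lambda>q. \<not> s_out A q)"

definition reduction :: "nat \<Rightarrow> nat \<Rightarrow> salg pmf \<Rightarrow> protocol pmf" where
  "reduction l s Alg = map_pmf (\<lambda>(A, \<pi>, R). reduction_protocol l s A \<pi> R)
                         (pair_pmf Alg (pmf_of_set (interval_perms \<times> streams n t)))"

lemma protocol_output_reduction_protocol:
  "valid_salg s A \<Longrightarrow> protocol_output (reduction_protocol l s A \<pi> R) X = (\<not> run_salg A l (embed X \<pi> R))"
  unfolding reduction_protocol_def run_salg_eq_salg_state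
  by (rule simulation_protocol_output[OF _ k_pos segmented_stream_embed])

lemma writes_at_most_reduction: "P \<in> set_pmf (reduction l s Alg) \<Longrightarrow> writes_at_most k (l * s) P"
  by (auto simp: reduction_def reduction_protocol_def writes_at_most_simulation_protocol)

lemma reduction_error_eq:
  assumes valid: "\<forall>A\<in>set_pmf Alg. valid_salg s A" and ne: "usd_streams b \<noteq> {}"
  shows "pmf_of_set (USD_inputs n (Sizes F) b) \<bind>
           (\<lambda>X. reduction l s Alg \<bind> (\<lambda>P. return_pmf (protocol_output P X \<noteq> b)))
       = Alg \<bind> (\<lambda>A. pmf_of_set (usd_streams b) \<bind> (\<lambda>y. return_pmf (run_salg A l y = b)))"
proof -
  let ?U = "pmf_of_set (USD_inputs n (Sizes F) b)" and ?\<rho> = "pmf_of_set (interval_perms \<times> streams n t)"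
  have "reduction l s Alg \<bind> (\<lambda>P. return_pmf (protocol_output P X \<noteq> b))
      = Alg \<bind> (\<lambda>A. ?\<rho> \<bind> (\<lambda>r. return_pmf (run_salg A l (embed X (fst r) (snd r)) = b)))" for X
    unfolding reduction_def
    by (auto simp: map_pmf_def pair_pmf_def bind_assoc_pmf bind_return_pmf valid
        protocol_output_reduction_protocol intro!: bind_pmf_cong split: prod.splits)
  then have outer: "?U \<bind> (\<lambda>X. reduction l s Alg \<bind> (\<lambda>P. return_pmf (protocol_output P X \<noteq> b)))
      = Alg \<bind> (\<lambda>A. ?U \<bind> (\<lambda>X. ?\<rho> \<bind> (\<lambda>r. return_pmf (run_salg A l (embed X (fst r) (snd r)) = b))))"
    by (simp add: bind_commute_pmf[of ?U Alg])
  have inner: "?U \<bind> (\<lambda>X. ?\<rho> \<bind> (\<lambda>r. return_pmf (run_salg A l (embed X (fst r) (snd r)) = b)))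
      = pmf_of_set (usd_streams b) \<bind> (\<lambda>y. return_pmf (run_salg A l y = b))" for A
  proof -
    obtain y where "y \<in> usd_streams b" using ne by blast
    then have "USD_inputs n (Sizes F) b \<noteq> {}" by (auto simp: usd_streams_def)
    moreover have "interval_perms \<times> streams n t \<noteq> {}"
      using embedding_perm_in_interval_perms[OF \<open>y \<in> usd_streams b\<close>] \<open>y \<in> usd_streams b\<close>
      by (auto simp: usd_streams_def)
    ultimately have "pair_pmf ?U ?\<rho> = pmf_of_set (USD_inputs n (Sizes F) b \<times> interval_perms \<times> streams n t)"
      using finite_USD_inputs finite_interval_perms finite_streams by (intro pair_pmf_of_set) auto
    then have "?U \<bind> (\<lambda>X. ?\<rho> \<bind> (\<lambda>r. return_pmf (run_salg A l (embed X (fst r) (snd r)) = b)))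
        = map_pmf (\<lambda>y. run_salg A l y = b) (map_pmf (\<lambda>(X, \<pi>, R). embed X \<pi> R)
            (pmf_of_set (USD_inputs n (Sizes F) b \<times> interval_perms \<times> streams n t)))"
      by (simp flip: \<open>pair_pmf ?U ?\<rho> = _\<close>)
         (simp add: pair_pmf_def map_pmf_def bind_assoc_pmf bind_return_pmf case_prod_beta)
    then show ?thesis unfolding map_pmf_embed[OF ne] by (simp add: map_pmf_def)
  qed
  show ?thesis unfolding outer inner ..
qed

lemma usd_error_reduction:
  assumes valid: "\<forall>A\<in>set_pmf Alg. valid_salg s A"
    and ne: "usd_streams True \<noteq> {}" "usd_streams False \<noteq> {}"
  shows "usd_error n (Sizes F) (reduction l s Alg)
     = (accept_prob Alg l (pmf_of_set (usd_streams True))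
        + (1 - accept_prob Alg l (pmf_of_set (usd_streams False)))) / 2"
proof -
  have error_b: "measure_pmf.prob (pmf_of_set (USD_inputs n (Sizes F) b) \<bind>
          (\<lambda>X. reduction l s Alg \<bind> (\<lambda>P. return_pmf (protocol_output P X \<noteq> b)))) {True}
      = measure_pmf.expectation Alg (\<lambda>A. measure_pmf.prob (pmf_of_set (usd_streams b)) {y. run_salg A l y = b})"
    if "usd_streams b \<noteq> {}" for b
    unfolding reduction_error_eq[OF valid that] by (rule prob_bind_return_eq_expectation)
  have "usd_error n (Sizes F) (reduction l s Alg)
      = (measure_pmf.expectation Alg (\<lambda>A. measure_pmf.prob (pmf_of_set (usd_streams True)) {y. run_salg A l y = True})
         + measure_pmf.expectation Alg (\<lambda>A. measure_pmf.prob (pmf_of_set (usd_streams False)) {y. run_salg A l y = False})) / 2"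
    unfolding usd_error_def prob_bernoulli_half_bind error_b[OF ne(1)] error_b[OF ne(2)] ..
  then show ?thesis
    using expectation_prob_Not[of Alg "pmf_of_set (usd_streams False)" "\<lambda>A y. run_salg A l y"]
    by (simp add: accept_prob_def)
qed

lemma usd_error_reduction_le:
  assumes dist: "distinguishes l s Alg (planted n t F) (uniform_stream n t) \<delta>"
    and large: "1000 * real t ^ 2 \<le> real n"
  shows "usd_error n (Sizes F) (reduction l s Alg) \<le> \<delta> + 3 / 2000"
proof -
  have valid: "\<forall>A\<in>set_pmf Alg. valid_salg s A" using dist by (simp add: distinguishes_def)
  note bounds = quadratic_regime_bounds[OF n_pos large]
  let ?acc = "\<lambda>D. accept_prob Alg l D"
  have "\<bar>?acc (pmf_of_set (usd_streams True)) - ?acc (planted n t F)\<bar> \<le> 2 / 1000"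
    by (intro accept_prob_diff_le order_trans[OF usd_streams_True_close bounds(2)])
  moreover have "\<bar>?acc (pmf_of_set (usd_streams False)) - ?acc (uniform_stream n t)\<bar> \<le> 1 / 1000"
    by (intro accept_prob_diff_le order_trans[OF usd_streams_False_close bounds(1)])
  moreover have "usd_error n (Sizes F) (reduction l s Alg)
      = (?acc (pmf_of_set (usd_streams True)) + (1 - ?acc (pmf_of_set (usd_streams False)))) / 2"
    using usd_error_reduction[OF valid usd_streams_nonempty[OF bounds(3)]] .
  ultimately show ?thesis
    using distinguishes_accept_prob[OF dist] unfolding abs_le_iff by (elim conjE) (simp add: field_simps)
qed

end

theorem mainTheorem16:
  "\<exists>C::real. C > 0 \<and>
     (\<forall>n t k (F :: nat set list) l s (Alg :: salg pmf).
        0 < n \<longrightarrow> C * real t ^ 2 \<le> real n \<longrightarrow>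
        is_interval_system t k F \<longrightarrow>
        distinguishes l s Alg (planted n t F) (uniform_stream n t) (5 / 1000) \<longrightarrow>
        (\<exists>Pr :: protocol pmf.
           (\<forall>P\<in>set_pmf Pr. writes_at_most k (l * s) P) \<and>
           usd_error n (Sizes F) Pr \<le> 1 / 100))"
proof (intro exI[of _ 1000] conjI allI impI)
  fix n t k :: nat and F :: "nat set list" and l s :: nat and Alg :: "salg pmf"
  assume n: "0 < n" and large: "1000 * real t ^ 2 \<le> real n" and F: "is_interval_system t k F"
    and dist: "distinguishes l s Alg (planted n t F) (uniform_stream n t) (5 / 1000)"
  have "0 < k"
  proof (rule ccontr)
    assume "\<not> 0 < k"
    then have "planted n t F = uniform_stream n t"
      using F planted_no_intervals[OF n] by (simp add: is_interval_system_def)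
    then show False using dist not_distinguishes_identical[of "5 / 1000"] by simp
  qed
  then interpret interval_reduction n t k F using F n by unfold_locales
  have "usd_error n (Sizes F) (reduction l s Alg) \<le> 5 / 1000 + 3 / 2000"
    by (rule usd_error_reduction_le[OF dist large])
  moreover have "\<forall>P\<in>set_pmf (reduction l s Alg). writes_at_most k (l * s) P"
    using writes_at_most_reduction by blast
  ultimately show "\<exists>Pr :: protocol pmf. (\<forall>P\<in>set_pmf Pr. writes_at_most k (l * s) P) \<and>
      usd_error n (Sizes F) Pr \<le> 1 / 100"
    by (intro exI[of _ "reduction l s Alg"]) simp
qed simp

end
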